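(* Let $\mathbb K$ be algebraically closed of characteristic zero, $T$ a torus with Lie algebra $\mathfrak t$, $V$ a finite-dimensional $T$-module and $\mu:V\oplus V^*\to\mathfrak t^*$, $\mu(x,y)(\xi)=y(\xi\cdot x)$. Then $(T,V)$ is visible if and only if the closed $T$-orbits in $\mu^{-1}(0)$ are exactly the orbits $T\cdot(x,y)$, $(x,y)\in\mu^{-1}(0)$, such that $T\cdot x$ is closed in $V$ and $T\cdot y$ is closed in $V^*$.
   Context: $(T,V)$ is visible if there are finitely many $T$-orbits $T\cdot x\subseteq V$ with $0\in\overline{T\cdot x}$. *)

theory Defs
  imports "HOL-Computational_Algebra.Polynomial"
begin

definition algebraically_closed :: "'a::field itself \<Rightarrow> bool" where
  "algebraically_closed _ \<longleftrightarrow> (\<forall>p::'a poly. degree p > 0 \<longrightarrow> (\<exists>x. poly p x = 0))"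

definition aspace :: "nat \<Rightarrow> (nat \<Rightarrow> 'a::zero) set" where
  "aspace m = {x. \<forall>i\<ge>m. x i = 0}"

inductive poly_fun :: "nat \<Rightarrow> ((nat \<Rightarrow> 'a::comm_ring_1) \<Rightarrow> 'a) \<Rightarrow> bool" for m where
  pf_const: "poly_fun m (\<lambda>x. c)"
| pf_var: "i < m \<Longrightarrow> poly_fun m (\<lambda>x. x i)"
| pf_add: "poly_fun m f \<Longrightarrow> poly_fun m g \<Longrightarrow> poly_fun m (\<lambda>x. f x + g x)"
| pf_mult: "poly_fun m f \<Longrightarrow> poly_fun m g \<Longrightarrow> poly_fun m (\<lambda>x. f x * g x)"

definition zariski_closed :: "nat \<Rightarrow> (nat \<Rightarrow> 'a::comm_ring_1) set \<Rightarrow> bool" where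
  "zariski_closed m S \<longleftrightarrow>
     (\<exists>F. (\<forall>f\<in>F. poly_fun m f) \<and> S = {x \<in> aspace m. \<forall>f\<in>F. f x = 0})"

definition zclosure :: "nat \<Rightarrow> (nat \<Rightarrow> 'a::comm_ring_1) set \<Rightarrow> (nat \<Rightarrow> 'a) set" where
  "zclosure m S = \<Inter>{C. zariski_closed m C \<and> S \<subseteq> C}"

definition torus :: "nat \<Rightarrow> (nat \<Rightarrow> 'a::field) set" where
  "torus r = {t. (\<forall>j<r. t j \<noteq> 0) \<and> (\<forall>j\<ge>r. t j = 1)}"

text \<open>A finite-dimensional T-module (diagonalised in a weight basis): K^m where T acts on the
  i-th coordinate by the character with exponent vector (w i 0, ..., w i (r-1)).\<close>
definition character :: "nat \<Rightarrow> (nat \<Rightarrow> int) \<Rightarrow> (nat \<Rightarrow> 'a::field) \<Rightarrow> 'a" where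
  "character r \<chi> t = (\<Prod>j<r. t j powi \<chi> j)"

definition tact :: "nat \<Rightarrow> nat \<Rightarrow> (nat \<Rightarrow> nat \<Rightarrow> int) \<Rightarrow> (nat \<Rightarrow> 'a::field) \<Rightarrow> (nat \<Rightarrow> 'a) \<Rightarrow> (nat \<Rightarrow> 'a)" where
  "tact m r w t x = (\<lambda>i. if i < m then character r (w i) t * x i else 0)"

definition torbit :: "nat \<Rightarrow> nat \<Rightarrow> (nat \<Rightarrow> nat \<Rightarrow> int) \<Rightarrow> (nat \<Rightarrow> 'a::field) \<Rightarrow> (nat \<Rightarrow> 'a) set" where
  "torbit m r w x = (\<lambda>t. tact m r w t x) ` torus r"

definition visible :: "nat \<Rightarrow> nat \<Rightarrow> (nat \<Rightarrow> nat \<Rightarrow> int) \<Rightarrow> 'a::field itself \<Rightarrow> bool" where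
  "visible m r w _ \<longleftrightarrow>
     finite {torbit m r w (x :: nat \<Rightarrow> 'a) | x. x \<in> aspace m \<and> (\<lambda>_. 0) \<in> zclosure m (torbit m r w x)}"

text \<open>Dual module V^*: dual basis, weights negated.\<close>
definition dual_weights :: "(nat \<Rightarrow> nat \<Rightarrow> int) \<Rightarrow> (nat \<Rightarrow> nat \<Rightarrow> int)" where
  "dual_weights w = (\<lambda>i j. - w i j)"

text \<open>V \<oplus> V^* as K^(2n): first n coordinates from V, next n from V^*.\<close>
definition pair_vec :: "nat \<Rightarrow> (nat \<Rightarrow> 'a::zero) \<Rightarrow> (nat \<Rightarrow> 'a) \<Rightarrow> (nat \<Rightarrow> 'a)" where
  "pair_vec n x y = (\<lambda>i. if i < n then x i else if i < 2 * n then y (i - n) else 0)"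

definition sum_weights :: "nat \<Rightarrow> (nat \<Rightarrow> nat \<Rightarrow> int) \<Rightarrow> (nat \<Rightarrow> nat \<Rightarrow> int)" where
  "sum_weights n w = (\<lambda>i. if i < n then w i else dual_weights w (i - n))"

definition lie_act :: "nat \<Rightarrow> nat \<Rightarrow> (nat \<Rightarrow> nat \<Rightarrow> int) \<Rightarrow> (nat \<Rightarrow> 'a::field) \<Rightarrow> (nat \<Rightarrow> 'a) \<Rightarrow> (nat \<Rightarrow> 'a)" where
  "lie_act n r w \<xi> x = (\<lambda>i. if i < n then (\<Sum>j<r. of_int (w i j) * \<xi> j) * x i else 0)"

text \<open>Moment map \<mu>(x,y)(\<xi>) = y(\<xi>\<cdot>x), using the dual basis pairing.\<close>
definition moment :: "nat \<Rightarrow> nat \<Rightarrow> (nat \<Rightarrow> nat \<Rightarrow> int) \<Rightarrow> (nat \<Rightarrow> 'a::field) \<Rightarrow> (nat \<Rightarrow> 'a) \<Rightarrow> (nat \<Rightarrow> 'a) \<Rightarrow> 'a" where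
  "moment n r w x y \<xi> = (\<Sum>i<n. y i * lie_act n r w \<xi> x i)"

definition moment_zero :: "nat \<Rightarrow> nat \<Rightarrow> (nat \<Rightarrow> nat \<Rightarrow> int) \<Rightarrow> ((nat \<Rightarrow> 'a::field) \<times> (nat \<Rightarrow> 'a)) set" where
  "moment_zero n r w = {(x, y). x \<in> aspace n \<and> y \<in> aspace n \<and>
      (\<forall>\<xi> \<in> aspace r. moment n r w x y \<xi> = 0)}"

end

theory Submission
  imports Defs "HOL-Library.Nat_Bijection"
begin

text \<open>
  For a diagonal torus action everything is read off from the weights on the support of a
  vector. With one-parameter subgroups and the transposition theorems of Gordan and Stiemke,
  \<open>0\<close> lies in the closure of \<open>T \<cdot> x\<close> iff these weights lie in an open half space, and \<open>T \<cdot> x\<close>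
  is closed iff the cone they span is a linear subspace. Hence \<open>(T, V)\<close> is visible iff weights
  lying in an open half space are linearly independent. Under that condition the positive part
  of an integer relation among the weights is again a relation (by conformal decomposition),
  which splits a strictly positive relation on \<open>supp x \<union> supp y\<close> into relations certifying that
  \<open>T \<cdot> x\<close> and \<open>T \<cdot> y\<close> are closed; the moment map equation supplies the relations needed on
  \<open>supp x \<inter> supp y\<close>. Conversely, a relation \<open>b\<close> among weights in an open half space gives a
  point \<open>(x, y) = (1, b)\<close> of \<open>\<mu>\<^sup>-\<^sup>1(0)\<close> whose orbit is closed although \<open>T \<cdot> x\<close> is not.
\<close>

section \<open>Transposition theorems for linear inequalities\<close>

definition dot :: "nat \<Rightarrow> (nat \<Rightarrow> 'a::comm_semiring_0) \<Rightarrow> (nat \<Rightarrow> 'a) \<Rightarrow> 'a" where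
  "dot r l v = (\<Sum>j<r. l j * v j)"

lemma dot_Suc: "dot (Suc r) l v = dot r l v + l r * v r"
  by (simp add: dot_def)

lemma dot_fun_upd_same: "dot r (l(r := c)) v = dot r l v"
  by (simp add: dot_def)

lemma dot_lin: "dot r l (\<lambda>j. a * v j + b * u j) = a * dot r l v + b * dot r l u"
  by (simp add: dot_def sum.distrib sum_distrib_left algebra_simps)

lemma dot_uminus: "dot r l (\<lambda>j. - v j) = - dot r l (v :: nat \<Rightarrow> 'a::comm_ring)"
  by (simp add: dot_def sum_negf)

lemma sum_dot_swap:
  "(\<Sum>i\<in>I. c i * dot r l (w i)) = (\<Sum>j<r. l j * (\<Sum>i\<in>I. c i * w i j))"
  unfolding dot_def by (simp add: sum_distrib_left sum_distrib_right mult_ac) (rule sum.swap)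

lemma separating_threshold:
  fixes b :: "'i \<Rightarrow> 'f::linordered_field"
  assumes fin: "finite P" "finite N"
    and le: "\<And>p q. p \<in> P \<Longrightarrow> q \<in> N \<Longrightarrow> b p \<le> b q"
    and less: "\<And>p q. p \<in> P \<Longrightarrow> q \<in> N \<Longrightarrow> p \<in> E \<or> q \<in> E \<Longrightarrow> b p < b q"
  shows "\<exists>\<mu>. (\<forall>p\<in>P. b p \<le> \<mu> \<and> (p \<in> E \<longrightarrow> b p < \<mu>)) \<and> (\<forall>q\<in>N. \<mu> \<le> b q \<and> (q \<in> E \<longrightarrow> \<mu> < b q))"
proof -
  consider "P = {}" | "N = {}" | "P \<noteq> {}" "N \<noteq> {}" by blast
  then show ?thesis
  proof cases
    case 1
    have "Min (insert 0 (b ` N)) \<le> b q" if "q \<in> N" for q using fin that by simp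
    then have "\<forall>q\<in>N. Min (insert 0 (b ` N)) - 1 < b q" by fastforce
    with 1 show ?thesis by (intro exI[of _ "Min (insert 0 (b ` N)) - 1"]) force
  next
    case 2
    have "b p \<le> Max (insert 0 (b ` P))" if "p \<in> P" for p using fin that by simp
    then have "\<forall>p\<in>P. b p < Max (insert 0 (b ` P)) + 1" by fastforce
    with 2 show ?thesis by (intro exI[of _ "Max (insert 0 (b ` P)) + 1"]) force
  next
    case 3
    have "Max (b ` P) \<in> b ` P" "Min (b ` N) \<in> b ` N" using 3 fin by (intro Max_in Min_in; simp)+
    then obtain p0 q0 where p0: "p0 \<in> P" "b p0 = Max (b ` P)" and q0: "q0 \<in> N" "b q0 = Min (b ` N)"
      by (metis imageE)
    have upper: "b p \<le> b p0" if "p \<in> P" for p using that p0 fin by simp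
    have lower: "b q0 \<le> b q" if "q \<in> N" for q using that q0 fin by simp
    have "b p0 \<le> b q0" using le p0 q0 by blast
    then show ?thesis
      using upper lower less[OF _ q0(1)] less[OF p0(1)]
      by (intro exI[of _ "(b p0 + b q0) / 2"]) (fastforce simp: field_simps)
  qed
qed

text \<open>Fourier--Motzkin elimination of the coordinate \<open>r\<close>: the index \<open>2 * i\<close> carries \<open>v i\<close>
  (used when \<open>v i r = 0\<close>), the odd index \<open>fm_pair (p, q)\<close> the combination of \<open>v p\<close> and \<open>v q\<close>
  whose \<open>r\<close>-th coordinate cancels.\<close>

definition fm_pair :: "nat \<times> nat \<Rightarrow> nat" where
  "fm_pair pq = 2 * prod_encode pq + 1"

definition fm_vec :: "nat \<Rightarrow> (nat \<Rightarrow> nat \<Rightarrow> 'f::linordered_field) \<Rightarrow> nat \<Rightarrow> nat \<Rightarrow> 'f" where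
  "fm_vec r v k = (if even k then v (k div 2) else
     (case prod_decode (k div 2) of (p, q) \<Rightarrow> (\<lambda>j. - v q r * v p j + v p r * v q j)))"

definition fm_indices :: "nat \<Rightarrow> (nat \<Rightarrow> nat \<Rightarrow> 'f::linordered_field) \<Rightarrow> nat set \<Rightarrow> nat set \<Rightarrow> nat set" where
  "fm_indices r v I E = (\<lambda>i. 2 * i) ` {i \<in> I. v i r = 0 \<and> i \<in> E} \<union>
     fm_pair ` {(p, q) \<in> I \<times> I. v p r > 0 \<and> v q r < 0 \<and> (p \<in> E \<or> q \<in> E)}"

lemma fm_vec_double [simp]: "fm_vec r v (2 * i) = v i"
  by (simp add: fm_vec_def)

lemma fm_vec_pair [simp]: "fm_vec r v (fm_pair (p, q)) = (\<lambda>j. - v q r * v p j + v p r * v q j)"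
  by (simp add: fm_vec_def fm_pair_def)

lemma inj_fm_pair: "inj fm_pair"
  unfolding inj_def fm_pair_def by (simp add: prod_encode_eq)

lemma double_neq_fm_pair [simp]: "2 * i \<noteq> fm_pair pq"
  unfolding fm_pair_def by presburger

lemma finite_fm_indices: "finite I \<Longrightarrow> finite (fm_indices r v I E)"
  unfolding fm_indices_def by (auto intro: finite_subset[of _ "I \<times> I"])

lemma fm_indices_subset: "fm_indices r v I E \<subseteq> fm_indices r v I I"
  unfolding fm_indices_def by auto

lemma fm_extend_functional:
  fixes v :: "nat \<Rightarrow> nat \<Rightarrow> 'f::linordered_field"
  assumes fin: "finite I" and EI: "E \<subseteq> I"
    and ge: "\<forall>k\<in>fm_indices r v I I. dot r l (fm_vec r v k) \<ge> 0"
    and gt: "\<forall>k\<in>fm_indices r v I E. dot r l (fm_vec r v k) > 0"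
  shows "\<exists>\<mu>. (\<forall>i\<in>I. dot (Suc r) (l(r := \<mu>)) (v i) \<ge> 0) \<and> (\<forall>i\<in>E. dot (Suc r) (l(r := \<mu>)) (v i) > 0)"
proof -
  define P where "P = {i\<in>I. v i r > 0}"
  define N where "N = {i\<in>I. v i r < 0}"
  define \<alpha> where "\<alpha> i = dot r l (v i)" for i
  have zero: "0 \<le> \<alpha> i \<and> (i \<in> E \<longrightarrow> 0 < \<alpha> i)" if "i \<in> I" "v i r = 0" for i
  proof -
    have "2 * i \<in> fm_indices r v I I" "i \<in> E \<longrightarrow> 2 * i \<in> fm_indices r v I E"
      using that unfolding fm_indices_def by auto
    then show ?thesis using ge gt by (auto simp: \<alpha>_def)
  qed
  have pair: "0 \<le> - v q r * \<alpha> p + v p r * \<alpha> q \<and> (p \<in> E \<or> q \<in> E \<longrightarrow> 0 < - v q r * \<alpha> p + v p r * \<alpha> q)"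
    if "p \<in> P" "q \<in> N" for p q
  proof -
    have "fm_pair (p, q) \<in> fm_indices r v I I" "p \<in> E \<or> q \<in> E \<longrightarrow> fm_pair (p, q) \<in> fm_indices r v I E"
      using that unfolding fm_indices_def P_def N_def by auto
    moreover have "dot r l (fm_vec r v (fm_pair (p, q))) = - v q r * \<alpha> p + v p r * \<alpha> q"
      by (simp only: fm_vec_pair dot_lin \<alpha>_def)
    ultimately show ?thesis using ge gt by metis
  qed
  define b where "b i = - \<alpha> i / v i r" for i
  have "b p \<le> b q \<and> (p \<in> E \<or> q \<in> E \<longrightarrow> b p < b q)" if "p \<in> P" "q \<in> N" for p q
    using pair[OF that] that by (auto simp: b_def P_def N_def field_simps)
  then obtain \<mu> where \<mu>: "\<forall>p\<in>P. b p \<le> \<mu> \<and> (p \<in> E \<longrightarrow> b p < \<mu>)" "\<forall>q\<in>N. \<mu> \<le> b q \<and> (q \<in> E \<longrightarrow> \<mu> < b q)"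
    using separating_threshold[of P N b E] fin by (auto simp: P_def N_def)
  have "0 \<le> \<alpha> i + \<mu> * v i r \<and> (i \<in> E \<longrightarrow> 0 < \<alpha> i + \<mu> * v i r)" if "i \<in> I" for i
  proof (cases "v i r" "0::'f" rule: linorder_cases)
    case less
    then show ?thesis using \<mu>(2) that by (auto simp: N_def b_def field_simps)
  next
    case equal
    then show ?thesis using zero that by simp
  next
    case greater
    then show ?thesis using \<mu>(1) that by (auto simp: P_def b_def field_simps)
  qed
  then show ?thesis using EI by (intro exI[of _ \<mu>]) (auto simp: dot_Suc dot_fun_upd_same \<alpha>_def)
qed

definition fm_lift :: "nat \<Rightarrow> (nat \<Rightarrow> nat \<Rightarrow> 'f::linordered_field) \<Rightarrow> nat set \<Rightarrow> (nat \<Rightarrow> 'f) \<Rightarrow> nat \<Rightarrow> 'f" where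
  "fm_lift r v I a i =
     (if v i r = 0 then a (2 * i)
      else if v i r > 0 then (\<Sum>q\<in>{q\<in>I. v q r < 0}. a (fm_pair (i, q)) * - v q r)
      else (\<Sum>p\<in>{p\<in>I. v p r > 0}. a (fm_pair (p, i)) * v p r))"

lemma fm_vec_eliminated: "k \<in> fm_indices r v I E \<Longrightarrow> fm_vec r v k r = 0"
  unfolding fm_indices_def by auto

lemma fm_lift_sum:
  assumes fin: "finite I"
  shows "(\<Sum>i\<in>I. fm_lift r v I a i * v i j) = (\<Sum>k\<in>fm_indices r v I I. a k * fm_vec r v k j)"
proof -
  define P where "P = {i\<in>I. v i r > 0}"
  define N where "N = {i\<in>I. v i r < 0}"
  define Z where "Z = {i\<in>I. v i r = 0}"
  have finPNZ: "finite P" "finite N" "finite Z" using fin by (auto simp: P_def N_def Z_def)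
  have I: "I = Z \<union> P \<union> N" and disj: "Z \<inter> P = {}" "Z \<inter> N = {}" "P \<inter> N = {}"
    by (auto simp: P_def N_def Z_def)
  have indices: "fm_indices r v I I = (\<lambda>i. 2 * i) ` Z \<union> fm_pair ` (P \<times> N)"
    by (auto simp: fm_indices_def P_def N_def Z_def)
  have "(\<Sum>k\<in>fm_indices r v I I. a k * fm_vec r v k j)
      = (\<Sum>k\<in>(\<lambda>i. 2 * i) ` Z. a k * fm_vec r v k j) + (\<Sum>k\<in>fm_pair ` (P \<times> N). a k * fm_vec r v k j)"
    unfolding indices using finPNZ by (intro sum.union_disjoint) auto
  also have "(\<Sum>k\<in>(\<lambda>i. 2 * i) ` Z. a k * fm_vec r v k j) = (\<Sum>i\<in>Z. a (2 * i) * v i j)"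
    by (subst sum.reindex) (auto simp: inj_on_def)
  also have "(\<Sum>k\<in>fm_pair ` (P \<times> N). a k * fm_vec r v k j)
      = (\<Sum>pq\<in>P \<times> N. a (fm_pair pq) * (- v (snd pq) r * v (fst pq) j + v (fst pq) r * v (snd pq) j))"
    by (subst sum.reindex) (auto intro!: inj_on_subset[OF inj_fm_pair] sum.cong split: prod.splits)
  also have "\<dots> = (\<Sum>p\<in>P. \<Sum>q\<in>N. a (fm_pair (p, q)) * - v q r * v p j)
      + (\<Sum>q\<in>N. \<Sum>p\<in>P. a (fm_pair (p, q)) * v p r * v q j)"
    unfolding sum.swap[of _ N P] sum.cartesian_product' sum.distrib[symmetric]
    by (intro sum.cong refl) (simp add: algebra_simps)
  also have "(\<Sum>p\<in>P. \<Sum>q\<in>N. a (fm_pair (p, q)) * - v q r * v p j) = (\<Sum>i\<in>P. fm_lift r v I a i * v i j)"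
    by (intro sum.cong) (auto simp: fm_lift_def P_def N_def sum_distrib_right)
  also have "(\<Sum>q\<in>N. \<Sum>p\<in>P. a (fm_pair (p, q)) * v p r * v q j) = (\<Sum>i\<in>N. fm_lift r v I a i * v i j)"
    by (intro sum.cong) (auto simp: fm_lift_def P_def N_def sum_distrib_right)
  also have "(\<Sum>i\<in>Z. a (2 * i) * v i j) = (\<Sum>i\<in>Z. fm_lift r v I a i * v i j)"
    by (intro sum.cong) (auto simp: fm_lift_def Z_def)
  finally show ?thesis
    unfolding I using finPNZ disj by (simp add: sum.union_disjoint Int_Un_distrib2 add.assoc)
qed

lemma fm_lift_nonneg:
  assumes "\<forall>k\<in>fm_indices r v I I. a k \<ge> 0" "i \<in> I"
  shows "fm_lift r v I a i \<ge> 0"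
proof -
  have pair: "a (fm_pair (p, q)) \<ge> 0" if "p \<in> I" "q \<in> I" "v p r > 0" "v q r < 0" for p q
    using assms(1) that unfolding fm_indices_def by auto
  have "a (fm_pair (i, q)) * - v q r \<ge> 0" if "v i r > 0" "q \<in> I" "v q r < 0" for q
    using pair[of i q] assms(2) that by (simp add: mult_nonneg_nonpos)
  moreover have "a (fm_pair (p, i)) * v p r \<ge> 0" if "v i r < 0" "p \<in> I" "v p r > 0" for p
    using pair[of p i] assms(2) that by simp
  moreover have "a (2 * i) \<ge> 0" if "v i r = 0" using assms that unfolding fm_indices_def by auto
  ultimately show ?thesis
    unfolding fm_lift_def by (auto intro!: sum_nonneg)
qed

lemma fm_lift_pos:
  assumes fin: "finite I" and nonneg: "\<forall>k\<in>fm_indices r v I I. a k \<ge> 0"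
    and k: "k \<in> fm_indices r v I E" "a k > 0"
  shows "\<exists>i\<in>E. fm_lift r v I a i > 0"
proof -
  have pair_nonneg: "a (fm_pair (p, q)) \<ge> 0" if "p \<in> I" "q \<in> I" "v p r > 0" "v q r < 0" for p q
    using nonneg that unfolding fm_indices_def by auto
  consider i where "i \<in> I" "i \<in> E" "v i r = 0" "k = 2 * i"
    | p q where "p \<in> I" "q \<in> I" "v p r > 0" "v q r < 0" "p \<in> E \<or> q \<in> E" "k = fm_pair (p, q)"
    using k(1) unfolding fm_indices_def by auto
  then show ?thesis
  proof cases
    case 1
    then show ?thesis using k by (intro bexI[of _ i]) (auto simp: fm_lift_def)
  next
    case 2
    show ?thesis
    proof (cases "p \<in> E")
      case True
      have "a (fm_pair (p, q)) * - v q r \<le> (\<Sum>q'\<in>{q'\<in>I. v q' r < 0}. a (fm_pair (p, q')) * - v q' r)"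
        using 2 fin by (intro member_le_sum) (auto simp: mult_nonneg_nonpos pair_nonneg)
      moreover have "a (fm_pair (p, q)) * - v q r > 0" using 2 k by (intro mult_pos_pos) auto
      ultimately show ?thesis using True 2 by (intro bexI[of _ p]) (auto simp: fm_lift_def)
    next
      case False
      have "a (fm_pair (p, q)) * v p r \<le> (\<Sum>p'\<in>{p'\<in>I. v p' r > 0}. a (fm_pair (p', q)) * v p' r)"
        using 2 fin by (intro member_le_sum) (auto simp: pair_nonneg)
      moreover have "a (fm_pair (p, q)) * v p r > 0" using 2 k by (intro mult_pos_pos) auto
      ultimately show ?thesis using False 2 by (intro bexI[of _ q]) (auto simp: fm_lift_def)
    qed
  qed
qed

theorem motzkin_transposition:
  fixes v :: "nat \<Rightarrow> nat \<Rightarrow> 'f::linordered_field"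
  assumes "finite I" "E \<subseteq> I"
  shows "(\<exists>l. (\<forall>i\<in>I. dot r l (v i) \<ge> 0) \<and> (\<forall>i\<in>E. dot r l (v i) > 0)) \<or>
         (\<exists>a. (\<forall>i\<in>I. a i \<ge> 0) \<and> (\<exists>i\<in>E. a i > 0) \<and> (\<forall>j<r. (\<Sum>i\<in>I. a i * v i j) = 0))"
  using assms
proof (induction r arbitrary: I E v)
  case 0
  then show ?case by (cases "E = {}") (auto simp: dot_def intro!: exI[of _ "\<lambda>_. 1"])
next
  case (Suc r)
  from Suc.IH[of "fm_indices r v I I" "fm_indices r v I E" "fm_vec r v",
      OF finite_fm_indices[OF Suc.prems(1)] fm_indices_subset]
  show ?case
  proof (elim disjE exE conjE)
    fix l assume "\<forall>k\<in>fm_indices r v I I. dot r l (fm_vec r v k) \<ge> 0"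
      "\<forall>k\<in>fm_indices r v I E. dot r l (fm_vec r v k) > 0"
    then show ?case using fm_extend_functional[OF Suc.prems] by blast
  next
    fix a assume nonneg: "\<forall>k\<in>fm_indices r v I I. a k \<ge> 0"
      and pos: "\<exists>k\<in>fm_indices r v I E. a k > 0"
      and rel: "\<forall>j<r. (\<Sum>k\<in>fm_indices r v I I. a k * fm_vec r v k j) = 0"
    have "(\<Sum>i\<in>I. fm_lift r v I a i * v i j) = 0" if "j < Suc r" for j
      using that rel fm_vec_eliminated[of _ r v I I]
      by (cases "j = r") (simp_all add: fm_lift_sum[OF Suc.prems(1)])
    moreover have "\<exists>i\<in>E. fm_lift r v I a i > 0" using pos fm_lift_pos[OF Suc.prems(1) nonneg] by blast
    ultimately show ?case using fm_lift_nonneg[OF nonneg] by blast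
  qed
qed

lemma common_denominator:
  fixes f :: "'i \<Rightarrow> rat"
  assumes "finite A"
  shows "\<exists>D::int. D > 0 \<and> (\<exists>g. \<forall>i\<in>A. of_int D * f i = of_int (g i))"
  using assms
proof (induction A rule: finite_induct)
  case (insert x A)
  then obtain D g where D: "D > 0" "\<forall>i\<in>A. of_int D * f i = of_int (g i)" by blast
  obtain a b where ab: "quotient_of (f x) = (a, b)" by fastforce
  have b: "b > 0" "of_int b * f x = of_int a"
    using quotient_of_denom_pos[OF ab] quotient_of_div[OF ab] by auto
  define g' where "g' i = (if i = x then D * a else b * g i)" for i
  have "of_int (D * b) * f i = of_int (g' i)" if "i \<in> insert x A" for i
    using that D b insert.hyps(2) by (auto simp: g'_def mult_ac)
  then show ?case using D b by (intro exI[of _ "D * b"]) auto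
qed (auto intro: exI[of _ 1])

theorem motzkin_transposition_int:
  fixes W :: "nat \<Rightarrow> nat \<Rightarrow> int"
  assumes "finite I" "E \<subseteq> I"
  shows "(\<exists>l. (\<forall>i\<in>I. dot r l (W i) \<ge> 0) \<and> (\<forall>i\<in>E. dot r l (W i) > 0)) \<or>
         (\<exists>a. (\<forall>i\<in>I. a i \<ge> 0) \<and> (\<exists>i\<in>E. a i > 0) \<and> (\<forall>j<r. (\<Sum>i\<in>I. a i * W i j) = 0))"
proof -
  define v :: "nat \<Rightarrow> nat \<Rightarrow> rat" where "v i j = of_int (W i j)" for i j
  from motzkin_transposition[OF assms, of r v] show ?thesis
  proof (elim disjE exE conjE)
    fix l assume l: "\<forall>i\<in>I. dot r l (v i) \<ge> 0" "\<forall>i\<in>E. dot r l (v i) > 0"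
    obtain D g where D: "D > 0" "\<forall>j\<in>{..<r}. of_int D * l j = of_int (g j)"
      using common_denominator[of "{..<r}" l] by blast
    have scaled: "of_int (dot r g (W i)) = of_int D * dot r l (v i)" for i
      using D(2) by (simp add: dot_def v_def sum_distrib_left flip: mult.assoc)
    have "(of_int (dot r g (W i)) :: rat) \<ge> 0" if "i \<in> I" for i
      using l that D(1) by (simp add: scaled)
    moreover have "(of_int (dot r g (W i)) :: rat) > 0" if "i \<in> E" for i
      using l that D(1) by (simp add: scaled)
    ultimately show ?thesis by (intro disjI1 exI[of _ g]) simp
  next
    fix a assume a: "\<forall>i\<in>I. a i \<ge> 0" "\<exists>i\<in>E. a i > 0" "\<forall>j<r. (\<Sum>i\<in>I. a i * v i j) = 0"
    obtain D g where D: "D > 0" "\<forall>i\<in>I. of_int D * a i = of_int (g i)"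
      using common_denominator[OF assms(1), of a] by blast
    have "(of_int (g i) :: rat) \<ge> 0" if "i \<in> I" for i
      using a(1) D that by (metis mult_nonneg_nonneg of_int_0_le_iff order_less_imp_le)
    moreover have "(of_int (g i) :: rat) > 0" if "i \<in> E" "a i > 0" for i
      using D that assms(2) by (metis in_mono mult_pos_pos of_int_0_less_iff)
    moreover have "(\<Sum>i\<in>I. g i * W i j) = 0" if "j < r" for j
    proof -
      have "(of_int (\<Sum>i\<in>I. g i * W i j) :: rat) = of_int D * (\<Sum>i\<in>I. a i * v i j)"
        using D(2) by (simp add: sum_distrib_left v_def flip: mult.assoc)
      then have "(of_int (\<Sum>i\<in>I. g i * W i j) :: rat) = 0" using a(3) that by simp
      then show ?thesis by (simp only: of_int_eq_0_iff)
    qed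
    ultimately show ?thesis using a(2) by (intro disjI2 exI[of _ g]) auto
  qed
qed

corollary gordan_alternative:
  fixes W :: "nat \<Rightarrow> nat \<Rightarrow> int"
  assumes "finite I" "\<nexists>l. \<forall>i\<in>I. dot r l (W i) > 0"
  shows "\<exists>a. (\<forall>i\<in>I. a i \<ge> 0) \<and> (\<exists>i\<in>I. a i > 0) \<and> (\<forall>j<r. (\<Sum>i\<in>I. a i * W i j) = 0)"
  using motzkin_transposition_int[OF assms(1) order_refl, of r W] assms(2) by auto

corollary stiemke_alternative:
  fixes W :: "nat \<Rightarrow> nat \<Rightarrow> int"
  assumes fin: "finite I" and no_l: "\<nexists>l. (\<forall>i\<in>I. dot r l (W i) \<ge> 0) \<and> (\<exists>i\<in>I. dot r l (W i) > 0)"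
  shows "\<exists>a. (\<forall>i\<in>I. a i > 0) \<and> (\<forall>j<r. (\<Sum>i\<in>I. a i * W i j) = 0)"
proof -
  have "\<exists>a. (\<forall>i\<in>I. a i \<ge> 0) \<and> a k > 0 \<and> (\<forall>j<r. (\<Sum>i\<in>I. a i * W i j) = 0)" if "k \<in> I" for k
    using motzkin_transposition_int[OF fin, of "{k}" r W] no_l that by auto
  then obtain A where A: "\<And>k. k \<in> I \<Longrightarrow>
      (\<forall>i\<in>I. A k i \<ge> 0) \<and> A k k > 0 \<and> (\<forall>j<r. (\<Sum>i\<in>I. A k i * W i j) = 0)"
    by metis
  define a where "a i = (\<Sum>k\<in>I. A k i)" for i
  have "a i > 0" if "i \<in> I" for i
    using A that fin member_le_sum[of i I "\<lambda>k. A k i"] unfolding a_def by force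
  moreover have "(\<Sum>i\<in>I. a i * W i j) = 0" if "j < r" for j
    using A that unfolding a_def by (simp add: sum_distrib_right sum.swap[of _ I I])
  ultimately show ?thesis by blast
qed

section \<open>Characters of the torus\<close>

lemma prod_power_int_distrib: "(\<Prod>i\<in>S. f i :: 'a::field) powi k = (\<Prod>i\<in>S. f i powi k)"
  by (induction S rule: infinite_finite_induct) (auto simp: power_int_mult_distrib)

lemma power_int_sum: "(x::'a::field) \<noteq> 0 \<Longrightarrow> x powi (\<Sum>i\<in>S. g i) = (\<Prod>i\<in>S. x powi g i)"
  by (induction S rule: infinite_finite_induct) (auto simp: power_int_add)

lemma character_cong: "(\<And>j. j < r \<Longrightarrow> \<chi> j = \<chi>' j) \<Longrightarrow> character r \<chi> t = character r \<chi>' t"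
  unfolding character_def by (intro prod.cong) auto

lemma character_Suc: "character (Suc r) \<chi> t = character r \<chi> t * t r powi \<chi> r"
  unfolding character_def by simp

lemma character_fun_upd_same: "character r \<chi> (t(r := s)) = character r \<chi> t"
  unfolding character_def by (intro prod.cong) auto

lemma character_nonzero: "t \<in> torus r \<Longrightarrow> character r \<chi> t \<noteq> 0"
  unfolding character_def torus_def by (auto simp: power_int_not_zero)

lemma character_one: "character r \<chi> (\<lambda>_. 1) = 1"
  unfolding character_def by simp

lemma character_mult: "character r \<chi> (\<lambda>j. s j * t j) = character r \<chi> s * (character r \<chi> t :: 'a::field)"
  unfolding character_def by (simp add: power_int_mult_distrib prod.distrib)

lemma character_add:
  "t \<in> torus r \<Longrightarrow> character r (\<lambda>j. \<chi> j + \<psi> j) t = character r \<chi> t * character r \<psi> t"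
  unfolding character_def torus_def by (auto simp: power_int_add prod.distrib intro!: prod.cong)

lemma character_scale: "character r (\<lambda>j. m * \<chi> j) t = character r \<chi> t powi m"
  unfolding character_def
  by (simp add: prod_power_int_distrib power_int_mult[symmetric] mult.commute)

lemma character_sum:
  assumes "t \<in> torus r"
  shows "character r (\<lambda>j. \<Sum>i\<in>S. c i * W i j) t = (\<Prod>i\<in>S. character r (W i) t powi c i)"
proof (induction S rule: infinite_finite_induct)
  case (insert i S)
  have "character r (\<lambda>j. \<Sum>i\<in>insert i S. c i * W i j) t
      = character r (\<lambda>j. c i * W i j + (\<Sum>i\<in>S. c i * W i j)) t"
    using insert by simp
  also have "\<dots> = character r (\<lambda>j. c i * W i j) t * character r (\<lambda>j. \<Sum>i\<in>S. c i * W i j) t"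
    using assms by (rule character_add)
  finally show ?case using insert by (simp add: character_scale)
qed (simp_all add: character_def)

lemma character_relation:
  assumes "t \<in> torus r" "\<forall>j<r. (\<Sum>i\<in>S. b i * W i j) = 0"
  shows "(\<Prod>i\<in>S. character r (W i) t powi b i) = (1::'a::field)"
proof -
  have "(\<Prod>i\<in>S. character r (W i) t powi b i) = character r (\<lambda>j. \<Sum>i\<in>S. b i * W i j) t"
    by (rule character_sum[OF assms(1), symmetric])
  also have "\<dots> = character r (\<lambda>j. 0) t" using assms(2) by (intro character_cong) simp
  finally show ?thesis by (simp add: character_def)
qed

lemma one_in_torus: "(\<lambda>_. 1) \<in> torus r"
  unfolding torus_def by simp

lemma torus_mult: "s \<in> torus r \<Longrightarrow> t \<in> torus r \<Longrightarrow> (\<lambda>j. s j * t j) \<in> torus r"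
  unfolding torus_def by auto

lemma torus_inverse: "t \<in> torus r \<Longrightarrow> (\<lambda>j. inverse (t j)) \<in> torus r"
  unfolding torus_def by auto

lemma torus_fun_upd: "t \<in> torus r \<Longrightarrow> s \<noteq> 0 \<Longrightarrow> t(r := s) \<in> torus (Suc r)"
  unfolding torus_def by auto

lemma torus_Suc: "t \<in> torus r \<Longrightarrow> t \<in> torus (Suc r)"
  unfolding torus_def by (auto simp: less_Suc_eq)

lemma power_int_root_exists:
  assumes ac: "algebraically_closed TYPE('a::field)" and "(c::'a) \<noteq> 0" "k \<noteq> 0"
  shows "\<exists>s. s \<noteq> 0 \<and> s powi k = c"
proof -
  have nat_root: "\<exists>s. s ^ n = d" if "n > 0" for n and d :: 'a
  proof -
    have "degree (monom 1 n + [:-d:]) > 0" using that by (simp add: degree_add_eq_left degree_monom_eq)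
    then obtain s where "poly (monom 1 n + [:-d:]) s = 0" using ac unfolding algebraically_closed_def by blast
    then show ?thesis by (auto simp: poly_monom)
  qed
  obtain s where s: "s ^ nat \<bar>k\<bar> = (if k > 0 then c else inverse c)"
    using nat_root[of "nat \<bar>k\<bar>"] assms(3) by fastforce
  then have "s \<noteq> 0" using assms(2,3) by (auto simp: zero_power split: if_split_asm)
  moreover have "s powi k = c"
    using s assms(3) power_int_minus[of s "- k"] by (cases "k > 0") (auto simp: power_int_nonneg_exp)
  ultimately show ?thesis by blast
qed

lemma bezout_sum_int:
  fixes x :: "'i \<Rightarrow> int"
  assumes "finite S"
  shows "\<exists>c g. (\<Sum>i\<in>S. c i * x i) = g \<and> (\<forall>i\<in>S. g dvd x i)"
  using assms
proof (induction S rule: finite_induct)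
  case (insert k S)
  then obtain c g where cg: "(\<Sum>i\<in>S. c i * x i) = g" "\<forall>i\<in>S. g dvd x i" by blast
  obtain u v where uv: "u * g + v * x k = gcd g (x k)" using bezout_int by blast
  define c' where "c' i = (if i = k then v else u * c i)" for i
  have "(\<Sum>i\<in>insert k S. c' i * x i) = v * x k + (\<Sum>i\<in>S. u * (c i * x i))"
    using insert by (auto simp: c'_def mult.assoc intro!: sum.cong)
  also have "\<dots> = gcd g (x k)" using uv cg by (simp flip: sum_distrib_left)
  finally show ?case using cg(2) by (intro exI[of _ c'] exI[of _ "gcd g (x k)"]) (auto intro: dvd_trans)
qed simp

text \<open>Subtracting multiples of a Bezout combination \<open>w'\<close> of the weights kills their \<open>r\<close>-th
  coordinates; relations among the reduced weights lift to relations among the original ones.\<close>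

lemma reduced_characters_respect_relations:
  fixes W :: "nat \<Rightarrow> nat \<Rightarrow> int" and u :: "nat \<Rightarrow> 'a::field"
  assumes fin: "finite S" and unz: "\<forall>i\<in>S. u i \<noteq> 0"
    and rel: "\<forall>b. (\<forall>j<Suc r. (\<Sum>i\<in>S. b i * W i j) = 0) \<longrightarrow> (\<Prod>i\<in>S. u i powi b i) = 1"
    and w': "\<And>j. w' j = (\<Sum>k\<in>S. c k * W k j)"
    and uw: "uw = (\<Prod>k\<in>S. u k powi c k)"
    and last: "\<forall>i\<in>S. W i r = m i * w' r"
    and rel': "\<forall>j<r. (\<Sum>i\<in>S. b i * (W i j - m i * w' j)) = 0"
  shows "(\<Prod>i\<in>S. (u i * uw powi (- m i)) powi b i) = 1"
proof -
  define B where "B = (\<Sum>i\<in>S. b i * m i)"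
  have "(\<Sum>i\<in>S. (b i - B * c i) * W i j) = (\<Sum>i\<in>S. b i * W i j) - B * w' j" for j
    by (simp add: w' algebra_simps sum_subtractf sum_distrib_left)
  moreover have "(\<Sum>i\<in>S. b i * W i j) = B * w' j" if "j < Suc r" for j
  proof (cases "j < r")
    case True
    then show ?thesis using rel'
      by (simp add: B_def algebra_simps sum_subtractf sum_distrib_left sum_distrib_right)
  next
    case False
    then have "j = r" using that by simp
    have "(\<Sum>i\<in>S. b i * W i r) = (\<Sum>i\<in>S. b i * m i * w' r)"
      using last by (auto intro: sum.cong)
    then show ?thesis using \<open>j = r\<close> by (simp add: B_def sum_distrib_right)
  qed
  ultimately have "(\<Prod>i\<in>S. u i powi (b i - B * c i)) = 1" using rel by simp
  moreover have "(\<Prod>i\<in>S. u i powi (b i - B * c i)) = (\<Prod>i\<in>S. u i powi b i) / uw powi B"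
    using unz by (simp add: uw power_int_diff prod_dividef prod_power_int_distrib
        power_int_mult[symmetric] mult.commute)
  moreover have uw_nonzero: "uw \<noteq> 0" using unz fin by (simp add: uw power_int_not_zero)
  ultimately have u_rel: "(\<Prod>i\<in>S. u i powi b i) = uw powi B" by (simp add: field_simps)
  have "(\<Prod>i\<in>S. (u i * uw powi (- m i)) powi b i) = (\<Prod>i\<in>S. u i powi b i) * (\<Prod>i\<in>S. uw powi (- m i * b i))"
    by (simp add: power_int_mult_distrib prod.distrib power_int_mult[symmetric])
  also have "(\<Prod>i\<in>S. uw powi (- m i * b i)) = uw powi (- B)"
    using uw_nonzero by (simp add: power_int_sum[symmetric] B_def sum_negf mult.commute)
  finally show ?thesis using u_rel uw_nonzero by (simp add: power_int_minus field_simps)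
qed

theorem torus_realizes_characters:
  fixes W :: "nat \<Rightarrow> nat \<Rightarrow> int" and u :: "nat \<Rightarrow> 'a::field"
  assumes ac: "algebraically_closed TYPE('a)" and fin: "finite S"
  shows "\<forall>i\<in>S. u i \<noteq> 0 \<Longrightarrow>
    \<forall>b. (\<forall>j<r. (\<Sum>i\<in>S. b i * W i j) = 0) \<longrightarrow> (\<Prod>i\<in>S. u i powi b i) = 1 \<Longrightarrow>
    \<exists>t\<in>torus r. \<forall>i\<in>S. character r (W i) t = u i"
proof (induction r arbitrary: W u)
  case 0
  have "u k = 1" if "k \<in> S" for k
    using "0.prems"(2)[rule_format, of "\<lambda>i. if i = k then 1 else 0"] fin that
    by (simp add: prod.delta' if_distrib cong: if_cong)
  then show ?case using one_in_torus by (auto simp: character_def)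
next
  case (Suc r)
  obtain c g where cg: "(\<Sum>i\<in>S. c i * W i r) = g" "\<forall>i\<in>S. g dvd W i r"
    using bezout_sum_int[OF fin, of "\<lambda>i. W i r"] by blast
  define m where "m i = W i r div g" for i
  define w' where "w' j = (\<Sum>i\<in>S. c i * W i j)" for j
  define uw where "uw = (\<Prod>i\<in>S. u i powi c i)"
  define W' where "W' i j = W i j - m i * w' j" for i j
  define u' where "u' i = u i * uw powi (- m i)" for i
  have w'r: "w' r = g" using cg(1) by (simp add: w'_def)
  have last: "\<forall>i\<in>S. W i r = m i * w' r" using cg(2) by (simp add: m_def w'r)
  have uw: "uw \<noteq> 0" using Suc.prems(1) fin by (simp add: uw_def power_int_not_zero)
  have "\<forall>i\<in>S. u' i \<noteq> 0" using Suc.prems(1) uw by (simp add: u'_def power_int_not_zero)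
  moreover have "\<forall>b. (\<forall>j<r. (\<Sum>i\<in>S. b i * W' i j) = 0) \<longrightarrow> (\<Prod>i\<in>S. u' i powi b i) = 1"
    using reduced_characters_respect_relations[OF fin Suc.prems w'_def uw_def last]
    by (simp add: W'_def u'_def)
  ultimately obtain t' where t': "t' \<in> torus r" "\<forall>i\<in>S. character r (W' i) t' = u' i"
    using Suc.IH by blast
  text \<open>Extend \<open>t'\<close> by an \<open>s\<close> with \<open>s\<^sup>g\<close> fixing the character \<open>w'\<close>; for \<open>g = 0\<close> all \<open>m i\<close> vanish.\<close>
  obtain s where s: "s \<noteq> 0" "g \<noteq> 0 \<Longrightarrow> s powi g = uw / character r w' t'"
    using power_int_root_exists[OF ac, of "uw / character r w' t'" g] uw character_nonzero[OF t'(1)]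
    by (cases "g = 0") auto
  define t where "t = t'(r := s)"
  have t: "t \<in> torus (Suc r)" unfolding t_def using torus_fun_upd[OF t'(1) s(1)] .
  have restrict: "character (Suc r) \<chi> t = character r \<chi> t' * s powi \<chi> r" for \<chi>
    by (simp add: t_def character_Suc character_fun_upd_same)
  have "character (Suc r) w' t powi m i = uw powi m i" for i
  proof (cases "g = 0")
    case False
    then show ?thesis using restrict[of w'] s character_nonzero[OF t'(1)] by (simp add: w'r)
  qed (simp add: m_def)
  moreover have "character (Suc r) (W' i) t = u' i" if "i \<in> S" for i
    using restrict[of "W' i"] t'(2) that last by (simp add: W'_def)
  ultimately have "character (Suc r) (W i) t = u i" if "i \<in> S" for i
    using character_add[OF t, of "W' i" "\<lambda>j. m i * w' j"] that uw
    by (simp add: W'_def character_scale u'_def power_int_minus field_simps)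
  then show ?case using t by blast
qed

section \<open>Torus orbits and their Zariski closures\<close>

definition support :: "nat \<Rightarrow> (nat \<Rightarrow> 'a::zero) \<Rightarrow> nat set" where
  "support m x = {i. i < m \<and> x i \<noteq> 0}"

lemma support_subset: "support m x \<subseteq> {..<m}"
  unfolding support_def by auto

lemma finite_support [simp]: "finite (support m x)"
  unfolding support_def by auto

lemma tact_tact: "tact m r W s (tact m r W t x) = tact m r W (\<lambda>j. s j * t j) x"
  unfolding tact_def by (auto simp: character_mult)

lemma torbit_subset_aspace: "torbit m r W x \<subseteq> aspace m"
  unfolding torbit_def tact_def aspace_def by auto

lemma mem_torbit_self: "x \<in> aspace m \<Longrightarrow> x \<in> torbit m r W x"
  unfolding torbit_def tact_def aspace_def
  by (rule image_eqI[OF _ one_in_torus]) (auto simp: character_one)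

lemma torbit_eq:
  assumes y: "y \<in> torbit m r W x"
  shows "torbit m r W y = torbit m r W (x :: nat \<Rightarrow> 'a::field)"
proof -
  obtain t where t: "t \<in> torus r" "y = tact m r W t x" using y unfolding torbit_def by auto
  show ?thesis
    unfolding torbit_def
  proof (intro equalityI image_subsetI)
    fix s :: "nat \<Rightarrow> 'a" assume "s \<in> torus r"
    then show "tact m r W s y \<in> (\<lambda>t. tact m r W t x) ` torus r"
      unfolding t(2) tact_tact by (intro imageI torus_mult t(1))
  next
    fix s :: "nat \<Rightarrow> 'a" assume s: "s \<in> torus r"
    have same: "character r \<chi> (\<lambda>j. s j * inverse (t j) * t j) = character r \<chi> s" for \<chi>
      using t(1) unfolding character_def torus_def by (intro prod.cong) (auto simp: mult.assoc)
    have "tact m r W s x = tact m r W (\<lambda>j. s j * inverse (t j) * t j) x"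
      unfolding tact_def same ..
    also have "\<dots> = tact m r W (\<lambda>j. s j * inverse (t j)) y"
      unfolding t(2) by (rule tact_tact[symmetric])
    finally show "tact m r W s x \<in> (\<lambda>s. tact m r W s y) ` torus r"
      using torus_mult[OF s torus_inverse[OF t(1)]] by blast
  qed
qed

lemma support_torbit:
  assumes "y \<in> torbit m r W x"
  shows "support m y = support m (x :: nat \<Rightarrow> 'a::field)"
proof -
  obtain t where t: "t \<in> torus r" "y = tact m r W t x" using assms unfolding torbit_def by auto
  then show ?thesis using character_nonzero[OF t(1)] unfolding support_def tact_def by auto
qed

lemma monomial_constant_on_torbit:
  assumes S: "S \<subseteq> {..<m}" and b: "\<forall>j<r. (\<Sum>i\<in>S. b i * W i j) = 0" and y: "y \<in> torbit m r W x"
  shows "(\<Prod>i\<in>S. y i powi b i) = (\<Prod>i\<in>S. x i powi b i :: 'a::field)"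
proof -
  obtain t where t: "t \<in> torus r" "y = tact m r W t x" using y unfolding torbit_def by blast
  have "(\<Prod>i\<in>S. y i powi b i) = (\<Prod>i\<in>S. character r (W i) t powi b i * x i powi b i)"
    using S by (intro prod.cong refl) (auto simp: t(2) tact_def power_int_mult_distrib)
  also have "\<dots> = (\<Prod>i\<in>S. character r (W i) t powi b i) * (\<Prod>i\<in>S. x i powi b i)"
    by (rule prod.distrib)
  finally show ?thesis using character_relation[OF t(1) b] by simp
qed

lemma poly_fun_diff:
  assumes "poly_fun m f" "poly_fun m g"
  shows "poly_fun m (\<lambda>y. f y - g y)"
proof -
  have "poly_fun m (\<lambda>y. f y + (- 1) * g y)" using assms by (intro pf_add pf_mult pf_const)
  then show ?thesis by simp
qed

lemma poly_fun_power: "poly_fun m f \<Longrightarrow> poly_fun m (\<lambda>y. f y ^ k)"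
  by (induction k) (simp_all add: pf_const pf_mult)

lemma poly_fun_monomial: "finite S \<Longrightarrow> S \<subseteq> {..<m} \<Longrightarrow> poly_fun m (\<lambda>y. \<Prod>i\<in>S. y i ^ k i)"
  by (induction S rule: finite_induct) (simp_all add: pf_const pf_mult poly_fun_power pf_var)

lemma zclosure_minimal: "zariski_closed m C \<Longrightarrow> S \<subseteq> C \<Longrightarrow> zclosure m S \<subseteq> C"
  unfolding zclosure_def by blast

lemma poly_fun_on_curve:
  fixes x :: "nat \<Rightarrow> 'a::field"
  assumes "poly_fun m f"
  shows "\<exists>P. \<forall>s. f (\<lambda>i. if i < m then s ^ e i * x i else 0) = poly P s"
  using assms
proof (induction rule: poly_fun.induct)
  case (pf_const c)
  then show ?case by (intro exI[of _ "[:c:]"]) simp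
next
  case (pf_var i)
  then show ?case by (intro exI[of _ "monom (x i) (e i)"]) (simp add: poly_monom mult.commute)
next
  case (pf_add f g)
  then obtain P Q where "\<forall>s. f (\<lambda>i. if i < m then s ^ e i * x i else 0) = poly P s"
    "\<forall>s. g (\<lambda>i. if i < m then s ^ e i * x i else 0) = poly Q s" by blast
  then show ?case by (intro exI[of _ "P + Q"]) simp
next
  case (pf_mult f g)
  then obtain P Q where "\<forall>s. f (\<lambda>i. if i < m then s ^ e i * x i else 0) = poly P s"
    "\<forall>s. g (\<lambda>i. if i < m then s ^ e i * x i else 0) = poly Q s" by blast
  then show ?case by (intro exI[of _ "P * Q"]) simp
qed

lemma poly_eq_0_if_vanishes_off_0:
  fixes P :: "'a::field_char_0 poly"
  assumes "\<forall>s. s \<noteq> 0 \<longrightarrow> poly P s = 0"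
  shows "poly P 0 = 0"
proof (rule ccontr)
  assume "poly P 0 \<noteq> 0"
  then have "finite {s. poly P s = 0}" by (intro poly_roots_finite) auto
  moreover have "UNIV - {0::'a} \<subseteq> {s. poly P s = 0}" using assms by auto
  ultimately have "finite (UNIV - {0::'a})" by (rule finite_subset[rotated])
  then show False using infinite_UNIV_char_0[where 'a='a] by simp
qed

definition one_param :: "nat \<Rightarrow> (nat \<Rightarrow> int) \<Rightarrow> 'a::field \<Rightarrow> nat \<Rightarrow> 'a" where
  "one_param r l s = (\<lambda>j. if j < r then s powi l j else 1)"

lemma one_param_in_torus: "s \<noteq> 0 \<Longrightarrow> one_param r l s \<in> torus r"
  unfolding one_param_def torus_def by (auto simp: power_int_not_zero)

lemma character_one_param: "(s::'a::field) \<noteq> 0 \<Longrightarrow> character r \<chi> (one_param r l s) = s powi dot r l \<chi>"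
  unfolding character_def one_param_def dot_def by (simp add: power_int_sum power_int_mult[symmetric])

text \<open>Polynomials vanishing along the monomial curve \<open>s \<mapsto> (s\<^sup>e\<^sup>i x\<^sub>i)\<^sub>i\<close> for \<open>s \<noteq> 0\<close> vanish at \<open>s = 0\<close>.\<close>

lemma monomial_curve_limit_in_zclosure:
  fixes x :: "nat \<Rightarrow> 'a::field_char_0"
  assumes curve: "\<And>s. s \<noteq> 0 \<Longrightarrow> (\<lambda>i. if i < m then s ^ e i * x i else 0) \<in> S"
  shows "(\<lambda>i. if i < m then 0 ^ e i * x i else 0) \<in> zclosure m S"
proof -
  define p where "p s = (\<lambda>i. if i < m then s ^ e i * x i else (0::'a))" for s
  have "p 0 \<in> C" if C: "zariski_closed m C" "S \<subseteq> C" for C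
  proof -
    obtain F where F: "\<forall>f\<in>F. poly_fun m f" "C = {y \<in> aspace m. \<forall>f\<in>F. f y = 0}"
      using C(1) unfolding zariski_closed_def by blast
    have "f (p 0) = 0" if f: "f \<in> F" for f
    proof -
      obtain P where P: "\<forall>s. f (p s) = poly P s"
        using poly_fun_on_curve[OF F(1)[rule_format, OF f], of e x] unfolding p_def by blast
      have "poly P s = 0" if "s \<noteq> 0" for s
      proof -
        have "p s \<in> C" using curve[OF that] C(2) unfolding p_def by blast
        then have "f (p s) = 0" using F(2) f by blast
        then show ?thesis using P by simp
      qed
      then have "poly P 0 = 0" by (intro poly_eq_0_if_vanishes_off_0) blast
      then show ?thesis using P by simp
    qed
    moreover have "p 0 \<in> aspace m" by (simp add: p_def aspace_def)
    ultimately show ?thesis using F(2) by blast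
  qed
  then show ?thesis unfolding zclosure_def p_def by blast
qed

text \<open>The point below is the limit of \<open>one_param r l s \<cdot> x\<close> as \<open>s \<rightarrow> 0\<close>, which exists because \<open>l\<close> is
  nonnegative on the weights of the support of \<open>x\<close>.\<close>

lemma one_param_limit_in_zclosure:
  fixes x :: "nat \<Rightarrow> 'a::field_char_0" and W :: "nat \<Rightarrow> nat \<Rightarrow> int"
  assumes l: "\<forall>i\<in>support m x. dot r l (W i) \<ge> 0"
  shows "(\<lambda>i. if i < m \<and> dot r l (W i) = 0 then x i else 0) \<in> zclosure m (torbit m r W x)"
proof -
  define e where "e i = nat (dot r l (W i))" for i
  have "(\<lambda>i. if i < m then s ^ e i * x i else 0) \<in> torbit m r W x" if "s \<noteq> 0" for s
  proof -
    have "character r (W i) (one_param r l s) * x i = s ^ e i * x i" if "i < m" for i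
    proof (cases "x i = 0")
      case False
      then have "dot r l (W i) \<ge> 0" using l \<open>i < m\<close> by (simp add: support_def)
      then show ?thesis using \<open>s \<noteq> 0\<close> by (simp add: character_one_param e_def power_int_nonneg_exp)
    qed simp
    then have "tact m r W (one_param r l s) x = (\<lambda>i. if i < m then s ^ e i * x i else 0)"
      unfolding tact_def by (intro ext) simp
    then show ?thesis unfolding torbit_def using one_param_in_torus[OF that] by (metis image_eqI)
  qed
  then have "(\<lambda>i. if i < m then 0 ^ e i * x i else 0) \<in> zclosure m (torbit m r W x)"
    by (rule monomial_curve_limit_in_zclosure)
  moreover have "(\<lambda>i. if i < m then 0 ^ e i * x i else 0) = (\<lambda>i. if i < m \<and> dot r l (W i) = 0 then x i else 0)"
  proof
    fix i
    show "(if i < m then 0 ^ e i * x i else 0) = (if i < m \<and> dot r l (W i) = 0 then x i else 0)"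
      using l by (cases "i < m \<and> x i \<noteq> 0") (auto simp: e_def support_def power_0_left)
  qed
  ultimately show ?thesis by simp
qed

definition in_open_halfspace :: "nat \<Rightarrow> (nat \<Rightarrow> nat \<Rightarrow> int) \<Rightarrow> nat set \<Rightarrow> bool" where
  "in_open_halfspace r W S \<longleftrightarrow> (\<exists>l. \<forall>i\<in>S. dot r l (W i) > 0)"

text \<open>By Stiemke's alternative: the convex cone spanned by the weights \<open>W i\<close>, \<open>i \<in> S\<close>, is a linear
  subspace.\<close>

definition cone_is_subspace :: "nat \<Rightarrow> (nat \<Rightarrow> nat \<Rightarrow> int) \<Rightarrow> nat set \<Rightarrow> bool" where
  "cone_is_subspace r W S \<longleftrightarrow> \<not> (\<exists>l. (\<forall>i\<in>S. dot r l (W i) \<ge> 0) \<and> (\<exists>i\<in>S. dot r l (W i) > 0))"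

theorem zero_in_zclosure_torbit_iff:
  fixes x :: "nat \<Rightarrow> 'a::field_char_0"
  shows "(\<lambda>_. 0) \<in> zclosure m (torbit m r W x) \<longleftrightarrow> in_open_halfspace r W (support m x)"
proof
  assume "in_open_halfspace r W (support m x)"
  then obtain l where l: "\<forall>i\<in>support m x. dot r l (W i) > 0" unfolding in_open_halfspace_def by blast
  then have "(\<lambda>i. if i < m \<and> dot r l (W i) = 0 then x i else 0) = (\<lambda>_. 0)"
    by (intro ext) (fastforce simp: support_def)
  then show "(\<lambda>_. 0) \<in> zclosure m (torbit m r W x)"
    using one_param_limit_in_zclosure[of m x r l W] l by (simp add: less_imp_le)
next
  assume zero: "(\<lambda>_. 0) \<in> zclosure m (torbit m r W x)"
  show "in_open_halfspace r W (support m x)"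
  proof (rule ccontr)
    assume "\<not> in_open_halfspace r W (support m x)"
    then obtain a where a: "\<forall>i\<in>support m x. a i \<ge> 0" "\<exists>i\<in>support m x. a i > 0"
        "\<forall>j<r. (\<Sum>i\<in>support m x. a i * W i j) = 0"
      using gordan_alternative[of "support m x" r W] unfolding in_open_halfspace_def by auto
    text \<open>The monomial \<open>y\<^sup>a\<close> is constant on the orbit, nonzero at \<open>x\<close>, and zero at \<open>0\<close>.\<close>
    define f where "f y = (\<Prod>i\<in>support m x. y i ^ nat (a i)) - (\<Prod>i\<in>support m x. x i ^ nat (a i))"
      for y :: "nat \<Rightarrow> 'a"
    have "poly_fun m f"
      unfolding f_def by (intro poly_fun_diff poly_fun_monomial finite_support support_subset pf_const)
    then have closed: "zariski_closed m {y \<in> aspace m. \<forall>g\<in>{f}. g y = 0}"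
      unfolding zariski_closed_def by blast
    have "(\<Prod>i\<in>support m x. z i ^ nat (a i)) = (\<Prod>i\<in>support m x. z i powi a i)" for z :: "nat \<Rightarrow> 'a"
      using a(1) by (intro prod.cong refl) (simp add: power_int_def)
    then have "f y = 0" if "y \<in> torbit m r W x" for y
      using monomial_constant_on_torbit[OF support_subset a(3) that] by (simp add: f_def)
    then have "torbit m r W x \<subseteq> {y \<in> aspace m. \<forall>g\<in>{f}. g y = 0}"
      using torbit_subset_aspace by blast
    then have "zclosure m (torbit m r W x) \<subseteq> {y \<in> aspace m. \<forall>g\<in>{f}. g y = 0}"
      by (rule zclosure_minimal[OF closed])
    then have "f (\<lambda>_. 0) = 0" using zero by auto
    moreover have "(\<Prod>i\<in>support m x. (0::'a) ^ nat (a i)) = 0"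
      using a(2) by (intro prod_zero) auto
    moreover have "(\<Prod>i\<in>support m x. x i ^ nat (a i)) \<noteq> 0"
      by (simp add: support_def)
    ultimately show False by (simp add: f_def)
  qed
qed

text \<open>The binomial \<open>y\<^sup>b\<^sup>+ x\<^sup>b\<^sup>- - y\<^sup>b\<^sup>- x\<^sup>b\<^sup>+\<close>, with \<open>b = b\<^sup>+ - b\<^sup>-\<close> encoded through the truncation
  of \<open>nat\<close> on negative integers; off the coordinate hyperplanes it vanishes iff \<open>(y/x)\<^sup>b = 1\<close>.\<close>

definition orbit_binomial :: "nat set \<Rightarrow> (nat \<Rightarrow> 'a::field) \<Rightarrow> (nat \<Rightarrow> int) \<Rightarrow> (nat \<Rightarrow> 'a) \<Rightarrow> 'a" where
  "orbit_binomial S x b y = (\<Prod>i\<in>S. y i ^ nat (b i)) * (\<Prod>i\<in>S. x i ^ nat (- b i))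
                    - (\<Prod>i\<in>S. y i ^ nat (- b i)) * (\<Prod>i\<in>S. x i ^ nat (b i))"

lemma poly_fun_binomial: "finite S \<Longrightarrow> S \<subseteq> {..<m} \<Longrightarrow> poly_fun m (orbit_binomial S x b)"
  unfolding orbit_binomial_def by (intro poly_fun_diff pf_mult poly_fun_monomial pf_const)

lemma prod_power_int_split:
  assumes "\<forall>i\<in>S. (c i :: 'a::field) \<noteq> 0"
  shows "(\<Prod>i\<in>S. c i powi b i) = (\<Prod>i\<in>S. c i ^ nat (b i)) / (\<Prod>i\<in>S. c i ^ nat (- b i))"
proof -
  have "c i powi b i = c i ^ nat (b i) / c i ^ nat (- b i)" if "i \<in> S" for i
    using assms that by (auto simp: power_int_def field_simps)
  then show ?thesis by (simp add: prod_dividef)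
qed

lemma binomial_eq_0_iff:
  assumes "finite S" "\<forall>i\<in>S. x i \<noteq> 0" "\<forall>i\<in>S. (y i :: 'a::field) \<noteq> 0"
  shows "orbit_binomial S x b y = 0 \<longleftrightarrow> (\<Prod>i\<in>S. (y i / x i) powi b i) = 1"
proof -
  define yp yn xp xn where "yp = (\<Prod>i\<in>S. y i ^ nat (b i))" "yn = (\<Prod>i\<in>S. y i ^ nat (- b i))"
    "xp = (\<Prod>i\<in>S. x i ^ nat (b i))" "xn = (\<Prod>i\<in>S. x i ^ nat (- b i))"
  have "yn \<noteq> 0" "xp \<noteq> 0" "xn \<noteq> 0" using assms by (auto simp: yp_yn_xp_xn_def)
  moreover have "(\<Prod>i\<in>S. (y i / x i) powi b i) = (yp / yn) / (xp / xn)"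
    using assms by (simp add: power_int_divide_distrib prod_dividef prod_power_int_split yp_yn_xp_xn_def)
  ultimately have "(\<Prod>i\<in>S. (y i / x i) powi b i) = (yp * xn) / (yn * xp)" by simp
  then show ?thesis
    using \<open>yn \<noteq> 0\<close> \<open>xp \<noteq> 0\<close> by (simp add: orbit_binomial_def yp_yn_xp_xn_def[symmetric] divide_eq_1_iff)
qed

lemma torbit_subset_binomial_locus:
  fixes x :: "nat \<Rightarrow> 'a::field"
  assumes y: "y \<in> torbit m r W x" and b: "\<forall>j<r. (\<Sum>i\<in>support m x. b i * W i j) = 0"
  shows "orbit_binomial (support m x) x b y = 0"
proof -
  obtain t where t: "t \<in> torus r" "y = tact m r W t x" using y unfolding torbit_def by blast
  have "\<forall>i\<in>support m x. y i / x i = character r (W i) t"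
    by (auto simp: t(2) tact_def support_def)
  moreover have "\<forall>i\<in>support m x. y i \<noteq> 0"
    using support_torbit[OF y] by (auto simp: support_def)
  ultimately show ?thesis
    using character_relation[OF t(1) b] by (simp add: binomial_eq_0_iff support_def)
qed

text \<open>For a strictly positive exponent vector \<open>B\<close> the binomial equation reads \<open>y\<^sup>B = x\<^sup>B\<close>.\<close>

lemma nonzero_if_orbit_binomial_eq_0:
  assumes fin: "finite S" and x: "\<forall>i\<in>S. x i \<noteq> 0" and B: "\<forall>i\<in>S. B i > 0"
    and bin: "orbit_binomial S x B y = 0"
  shows "\<forall>i\<in>S. (y i :: 'a::field) \<noteq> 0"
proof -
  have "(\<Prod>i\<in>S. z i ^ nat (- B i)) = 1" for z :: "nat \<Rightarrow> 'a"
  proof (intro prod.neutral ballI)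
    fix i assume "i \<in> S"
    then have "B i > 0" using B by simp
    then show "z i ^ nat (- B i) = 1" by simp
  qed
  then have "(\<Prod>i\<in>S. y i ^ nat (B i)) = (\<Prod>i\<in>S. x i ^ nat (B i))"
    using bin by (simp add: orbit_binomial_def)
  moreover have "(\<Prod>i\<in>S. x i ^ nat (B i)) \<noteq> 0" using x fin by simp
  ultimately have "(\<Prod>i\<in>S. y i ^ nat (B i)) \<noteq> 0" by simp
  then have "\<forall>i\<in>S. y i ^ nat (B i) \<noteq> 0" using fin by simp
  then show ?thesis using B by simp
qed

lemma binomial_locus_subset_torbit:
  fixes x :: "nat \<Rightarrow> 'a::field"
  assumes ac: "algebraically_closed TYPE('a)" and y: "y \<in> aspace m"
    and off: "\<forall>i<m. i \<notin> support m x \<longrightarrow> y i = 0"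
    and bin: "\<forall>b. (\<forall>j<r. (\<Sum>i\<in>support m x. b i * W i j) = 0) \<longrightarrow> orbit_binomial (support m x) x b y = 0"
    and B: "\<forall>i\<in>support m x. B i > 0" "\<forall>j<r. (\<Sum>i\<in>support m x. B i * W i j) = 0"
  shows "y \<in> torbit m r W x"
proof -
  define S where "S = support m x"
  have x: "\<forall>i\<in>S. x i \<noteq> 0" by (simp add: S_def support_def)
  have y_nonzero: "\<forall>i\<in>S. y i \<noteq> 0"
    using nonzero_if_orbit_binomial_eq_0[OF finite_support x[unfolded S_def] B(1)] bin B(2)
    by (simp add: S_def)
  have nonzero: "\<forall>i\<in>S. y i / x i \<noteq> 0" using x y_nonzero by simp
  have rel: "\<forall>b. (\<forall>j<r. (\<Sum>i\<in>S. b i * W i j) = 0) \<longrightarrow> (\<Prod>i\<in>S. (y i / x i) powi b i) = 1"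
    using bin binomial_eq_0_iff[OF _ x y_nonzero] by (simp add: S_def)
  obtain t where t: "t \<in> torus r" "\<forall>i\<in>S. character r (W i) t = y i / x i"
    using torus_realizes_characters[OF ac finite_support nonzero[unfolded S_def] rel[unfolded S_def]]
    unfolding S_def by blast
  have "tact m r W t x = y"
  proof
    fix i
    show "tact m r W t x i = y i"
    proof (cases "i < m")
      case True
      show ?thesis
      proof (cases "i \<in> S")
        case False
        then have "x i = 0" "y i = 0" using off True by (auto simp: S_def support_def)
        then show ?thesis by (simp add: tact_def)
      qed (use t(2) x True in \<open>simp add: tact_def\<close>)
    next
      case False
      then show ?thesis using y by (simp add: tact_def aspace_def)
    qed
  qed
  then show ?thesis using t(1) unfolding torbit_def by blast
qed

lemma cone_is_subspace_if_closed_torbit: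
  fixes x :: "nat \<Rightarrow> 'a::field_char_0"
  assumes closed: "zariski_closed m (torbit m r W x)"
  shows "cone_is_subspace r W (support m x)"
  unfolding cone_is_subspace_def
proof
  assume "\<exists>l. (\<forall>i\<in>support m x. dot r l (W i) \<ge> 0) \<and> (\<exists>i\<in>support m x. dot r l (W i) > 0)"
  then obtain l k where l: "\<forall>i\<in>support m x. dot r l (W i) \<ge> 0"
    and k: "k \<in> support m x" "dot r l (W k) > 0" by blast
  define z where "z = (\<lambda>i. if i < m \<and> dot r l (W i) = 0 then x i else 0)"
  have "z \<in> torbit m r W x"
    using one_param_limit_in_zclosure[OF l] zclosure_minimal[OF closed order_refl]
    unfolding z_def by blast
  then have "support m z = support m x" by (rule support_torbit)
  moreover have "k \<notin> support m z" using k by (simp add: z_def support_def)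
  ultimately show False using k by simp
qed

lemma closed_torbit_if_cone_is_subspace:
  fixes x :: "nat \<Rightarrow> 'a::field_char_0"
  assumes ac: "algebraically_closed TYPE('a)" and "cone_is_subspace r W (support m x)"
  shows "zariski_closed m (torbit m r W x)"
proof -
  obtain B where B: "\<forall>i\<in>support m x. B i > 0" "\<forall>j<r. (\<Sum>i\<in>support m x. B i * W i j) = 0"
    using stiemke_alternative[of "support m x" r W] assms(2) unfolding cone_is_subspace_def by auto
  define F :: "((nat \<Rightarrow> 'a) \<Rightarrow> 'a) set" where
    "F = (\<lambda>i y. y i) ` {i. i < m \<and> i \<notin> support m x}
       \<union> orbit_binomial (support m x) x ` {b. \<forall>j<r. (\<Sum>i\<in>support m x. b i * W i j) = 0}"
  have "\<forall>f\<in>F. poly_fun m f"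
    unfolding F_def by (auto intro: pf_var poly_fun_binomial[OF finite_support support_subset])
  moreover have "torbit m r W x = {y \<in> aspace m. \<forall>f\<in>F. f y = 0}"
  proof (intro equalityI subsetI)
    fix y assume y: "y \<in> torbit m r W x"
    have "y i = 0" if "i < m" "i \<notin> support m x" for i
      using support_torbit[OF y] that by (auto simp: support_def)
    then show "y \<in> {y \<in> aspace m. \<forall>f\<in>F. f y = 0}"
      using y torbit_subset_aspace[of m r W x] torbit_subset_binomial_locus[OF y] by (auto simp: F_def)
  next
    fix y assume "y \<in> {y \<in> aspace m. \<forall>f\<in>F. f y = 0}"
    then have "y \<in> aspace m" "\<forall>i<m. i \<notin> support m x \<longrightarrow> y i = 0"
      "\<forall>b. (\<forall>j<r. (\<Sum>i\<in>support m x. b i * W i j) = 0) \<longrightarrow> orbit_binomial (support m x) x b y = 0"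
      by (auto simp: F_def)
    then show "y \<in> torbit m r W x" by (rule binomial_locus_subset_torbit[OF ac _ _ _ B])
  qed
  ultimately show ?thesis unfolding zariski_closed_def by blast
qed

theorem closed_torbit_iff:
  fixes x :: "nat \<Rightarrow> 'a::field_char_0"
  assumes "algebraically_closed TYPE('a)"
  shows "zariski_closed m (torbit m r W x) \<longleftrightarrow> cone_is_subspace r W (support m x)"
  using cone_is_subspace_if_closed_torbit closed_torbit_if_cone_is_subspace[OF assms] by blast

section \<open>Visibility\<close>

definition lin_indep_weights :: "nat \<Rightarrow> (nat \<Rightarrow> nat \<Rightarrow> int) \<Rightarrow> nat set \<Rightarrow> bool" where
  "lin_indep_weights r W S \<longleftrightarrow> (\<forall>b. (\<forall>j<r. (\<Sum>i\<in>S. b i * W i j) = 0) \<longrightarrow> (\<forall>i\<in>S. b i = 0))"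

definition visible_weights :: "nat \<Rightarrow> nat \<Rightarrow> (nat \<Rightarrow> nat \<Rightarrow> int) \<Rightarrow> bool" where
  "visible_weights n r w \<longleftrightarrow> (\<forall>S \<subseteq> {..<n}. in_open_halfspace r w S \<longrightarrow> lin_indep_weights r w S)"

lemma power_int_of_nat_Suc_inj:
  assumes "q \<noteq> 0" and "(of_nat (Suc c) :: 'a::field_char_0) powi q = of_nat (Suc d) powi q"
  shows "c = d"
proof -
  have "(of_nat (Suc c) :: 'a) ^ nat \<bar>q\<bar> = of_nat (Suc d) ^ nat \<bar>q\<bar>"
  proof (cases "q > 0")
    case True
    then show ?thesis using assms(2) by (simp add: power_int_nonneg_exp)
  next
    case False
    then have "q = - (- q)" "- q \<ge> 0" using assms(1) by auto
    then have "inverse ((of_nat (Suc c) :: 'a) ^ nat (- q)) = inverse (of_nat (Suc d) ^ nat (- q))"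
      using assms(2) by (metis power_int_minus power_int_nonneg_exp)
    then show ?thesis using False by simp
  qed
  then have "Suc c ^ nat \<bar>q\<bar> = Suc d ^ nat \<bar>q\<bar>" by (metis of_nat_eq_iff of_nat_power)
  then show ?thesis using assms(1) power_eq_iff_eq_base[of "nat \<bar>q\<bar>" "Suc c" "Suc d"] by simp
qed

text \<open>A dependent set \<open>S\<close> of weights in an open half space yields the infinitely many orbits of
  the points that are \<open>1\<close> on \<open>S\<close> except for the value \<open>c + 1\<close> at a coordinate \<open>k\<close> involved in a
  relation \<open>b\<close>; they are told apart by the invariant monomial \<open>y\<^sup>b\<close>.\<close>

lemma visible_weights_if_visible:
  assumes vis: "visible n r w TYPE('a::field_char_0)"
  shows "visible_weights n r w"
proof (rule ccontr)
  assume "\<not> visible_weights n r w"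
  then obtain S b k where S: "S \<subseteq> {..<n}" "in_open_halfspace r w S"
    and b: "\<forall>j<r. (\<Sum>i\<in>S. b i * w i j) = 0" and k: "k \<in> S" "b k \<noteq> 0"
    unfolding visible_weights_def lin_indep_weights_def by blast
  have fin: "finite S" using S(1) finite_subset by blast
  define x :: "nat \<Rightarrow> nat \<Rightarrow> 'a" where
    "x c = (\<lambda>i. if i \<in> S then (if i = k then of_nat (Suc c) else 1) else 0)" for c
  have x: "x c \<in> aspace n" for c using S(1) by (auto simp: x_def aspace_def)
  have "support n (x c) = S" for c
    using S(1) of_nat_neq_0[where 'a='a] by (auto simp: x_def support_def simp del: of_nat_Suc)
  then have null: "(\<lambda>_. 0) \<in> zclosure n (torbit n r w (x c))" for c
    using S(2) by (simp add: zero_in_zclosure_torbit_iff)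
  have monomial: "(\<Prod>i\<in>S. x c i powi b i) = of_nat (Suc c) powi b k" for c
  proof -
    have "(\<Prod>i\<in>S. x c i powi b i) = (\<Prod>i\<in>S. if i = k then of_nat (Suc c) powi b k else 1)"
      unfolding x_def by (intro prod.cong refl) auto
    then show ?thesis using fin k by (simp add: prod.delta)
  qed
  have "inj (\<lambda>c. torbit n r w (x c))"
  proof
    fix c d assume "torbit n r w (x c) = torbit n r w (x d)"
    then have "x d \<in> torbit n r w (x c)" using mem_torbit_self[OF x] by blast
    then have "(\<Prod>i\<in>S. x d i powi b i) = (\<Prod>i\<in>S. x c i powi b i)"
      by (rule monomial_constant_on_torbit[OF S(1) b])
    then have "of_nat (Suc d) powi b k = (of_nat (Suc c) powi b k :: 'a)" by (simp only: monomial)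
    then show "c = d" by (rule power_int_of_nat_Suc_inj[OF k(2), symmetric])
  qed
  then have "infinite (range (\<lambda>c. torbit n r w (x c)))" by (rule range_inj_infinite)
  moreover have "range (\<lambda>c. torbit n r w (x c)) \<subseteq>
      {torbit n r w y | y :: nat \<Rightarrow> 'a. y \<in> aspace n \<and> (\<lambda>_. 0) \<in> zclosure n (torbit n r w y)}"
    using x null by blast
  moreover have "finite {torbit n r w y | y :: nat \<Rightarrow> 'a. y \<in> aspace n \<and> (\<lambda>_. 0) \<in> zclosure n (torbit n r w y)}"
    using vis unfolding visible_def .
  ultimately show False using finite_subset by blast
qed

lemma indicator_in_torbit:
  fixes x :: "nat \<Rightarrow> 'a::field"
  assumes ac: "algebraically_closed TYPE('a)" and x: "x \<in> aspace n"
    and indep: "lin_indep_weights r w (support n x)"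
  shows "(\<lambda>i. if i \<in> support n x then 1 else 0) \<in> torbit n r w x"
proof -
  have nonzero: "\<forall>i\<in>support n x. inverse (x i) \<noteq> 0" by (simp add: support_def)
  have rel: "\<forall>b. (\<forall>j<r. (\<Sum>i\<in>support n x. b i * w i j) = 0) \<longrightarrow>
      (\<Prod>i\<in>support n x. inverse (x i) powi b i) = 1"
  proof (intro allI impI)
    fix b assume "\<forall>j<r. (\<Sum>i\<in>support n x. b i * w i j) = 0"
    then have "\<forall>i\<in>support n x. b i = 0" using indep unfolding lin_indep_weights_def by blast
    then show "(\<Prod>i\<in>support n x. inverse (x i) powi b i) = 1" by simp
  qed
  obtain t where t: "t \<in> torus r" "\<forall>i\<in>support n x. character r (w i) t = inverse (x i)"
    using torus_realizes_characters[OF ac finite_support nonzero rel] by blast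
  have "tact n r w t x i = (if i \<in> support n x then 1 else 0)" for i
  proof (cases "i \<in> support n x")
    case False
    then have "x i = 0" using x by (auto simp: support_def aspace_def)
    then show ?thesis using False by (simp add: tact_def)
  qed (use t(2) in \<open>simp add: tact_def support_def\<close>)
  then have "tact n r w t x = (\<lambda>i. if i \<in> support n x then 1 else 0)" ..
  then show ?thesis using t(1) unfolding torbit_def by (metis image_eqI)
qed

lemma visible_if_visible_weights:
  assumes ac: "algebraically_closed TYPE('a::field_char_0)" and vw: "visible_weights n r w"
  shows "visible n r w TYPE('a)"
proof -
  define e :: "nat set \<Rightarrow> nat \<Rightarrow> 'a" where "e S = (\<lambda>i. if i \<in> S then 1 else 0)" for S
  have "{torbit n r w x | x :: nat \<Rightarrow> 'a. x \<in> aspace n \<and> (\<lambda>_. 0) \<in> zclosure n (torbit n r w x)}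
      \<subseteq> (\<lambda>S. torbit n r w (e S)) ` Pow {..<n}"
  proof clarify
    fix x :: "nat \<Rightarrow> 'a" assume x: "x \<in> aspace n" and "(\<lambda>_. 0) \<in> zclosure n (torbit n r w x)"
    then have "in_open_halfspace r w (support n x)" by (simp add: zero_in_zclosure_torbit_iff)
    then have "lin_indep_weights r w (support n x)"
      using vw support_subset[of n x] unfolding visible_weights_def by simp
    then have "torbit n r w (e (support n x)) = torbit n r w x"
      unfolding e_def by (rule torbit_eq[OF indicator_in_torbit[OF ac x]])
    then show "torbit n r w x \<in> (\<lambda>S. torbit n r w (e S)) ` Pow {..<n}"
      using support_subset by blast
  qed
  then show ?thesis unfolding visible_def by (rule finite_subset) simp
qed

theorem visible_iff_visible_weights:
  assumes "algebraically_closed TYPE('a::field_char_0)"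
  shows "visible n r w TYPE('a) \<longleftrightarrow> visible_weights n r w"
  using visible_weights_if_visible visible_if_visible_weights[OF assms] by blast

section \<open>Integer relations among visible weights\<close>

definition weight_relation :: "nat \<Rightarrow> nat \<Rightarrow> (nat \<Rightarrow> nat \<Rightarrow> int) \<Rightarrow> (nat \<Rightarrow> int) \<Rightarrow> bool" where
  "weight_relation n r w \<rho> \<longleftrightarrow> (\<forall>i\<ge>n. \<rho> i = 0) \<and> (\<forall>j<r. (\<Sum>i<n. \<rho> i * w i j) = 0)"

definition conformal :: "(nat \<Rightarrow> int) \<Rightarrow> (nat \<Rightarrow> int) \<Rightarrow> bool" where
  "conformal a b \<longleftrightarrow> (\<forall>i. (a i > 0 \<longrightarrow> b i > 0) \<and> (a i < 0 \<longrightarrow> b i < 0))"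

lemma conformal_refl: "conformal a a"
  unfolding conformal_def by blast

lemma conformal_trans: "conformal a b \<Longrightarrow> conformal b c \<Longrightarrow> conformal a c"
  unfolding conformal_def by blast

lemma conformal_uminus: "conformal (\<lambda>i. - a i) (\<lambda>i. - b i) \<longleftrightarrow> conformal a b"
  unfolding conformal_def by auto

lemma weight_relation_outside: "weight_relation n r w \<rho> \<Longrightarrow> n \<le> i \<Longrightarrow> \<rho> i = 0"
  unfolding weight_relation_def by auto

lemma weight_relation_lincomb:
  assumes "weight_relation n r w a" "weight_relation n r w b"
  shows "weight_relation n r w (\<lambda>i. c * a i + d * b i)"
proof -
  have "(\<Sum>i<n. (c * a i + d * b i) * w i j) = c * (\<Sum>i<n. a i * w i j) + d * (\<Sum>i<n. b i * w i j)" for j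
    by (simp add: sum.distrib sum_distrib_left distrib_right mult.assoc)
  then show ?thesis using assms unfolding weight_relation_def by simp
qed

lemma weight_relation_uminus: "weight_relation n r w a \<Longrightarrow> weight_relation n r w (\<lambda>i. - a i)"
  using weight_relation_lincomb[of n r w a a "-1" 0] by simp

lemma weight_relation_restrict:
  assumes "S \<subseteq> {..<n}" "\<forall>j<r. (\<Sum>i\<in>S. a i * w i j) = 0"
  shows "weight_relation n r w (\<lambda>i. if i \<in> S then a i else 0)"
proof -
  have "(\<Sum>i<n. (if i \<in> S then a i else 0) * w i j) = (\<Sum>i\<in>S. (if i \<in> S then a i else 0) * w i j)" for j
    by (rule sum.mono_neutral_right) (use assms(1) in auto)
  then have "(\<Sum>i<n. (if i \<in> S then a i else 0) * w i j) = (\<Sum>i\<in>S. a i * w i j)" for j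
    by simp
  then show ?thesis using assms unfolding weight_relation_def by auto
qed

lemma weight_relation_on_support:
  assumes "weight_relation n r w \<rho>" "j < r"
  shows "(\<Sum>i\<in>support n \<rho>. \<rho> i * w i j) = 0"
proof -
  have "(\<Sum>i<n. \<rho> i * w i j) = (\<Sum>i\<in>support n \<rho>. \<rho> i * w i j)"
    by (intro sum.mono_neutral_right) (auto simp: support_def)
  then show ?thesis using assms unfolding weight_relation_def by simp
qed

lemma support_uminus [simp]: "support n (\<lambda>i. - \<rho> i) = support n (\<rho> :: nat \<Rightarrow> int)"
  unfolding support_def by simp

lemma exists_min_ratio:
  fixes \<sigma> \<tau> :: "nat \<Rightarrow> int"
  assumes "finite D" "D \<noteq> {}" "\<forall>j\<in>D. \<tau> j > 0"
  shows "\<exists>i0\<in>D. \<forall>j\<in>D. \<sigma> i0 * \<tau> j \<le> \<tau> i0 * \<sigma> j"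
proof -
  define q where "q j = (of_int (\<sigma> j) / of_int (\<tau> j) :: rat)" for j
  have "Min (q ` D) \<in> q ` D" using assms by (intro Min_in) auto
  then obtain i0 where i0: "i0 \<in> D" "q i0 = Min (q ` D)" by auto
  have "\<sigma> i0 * \<tau> j \<le> \<tau> i0 * \<sigma> j" if "j \<in> D" for j
  proof -
    have "q i0 \<le> q j" using i0(2) assms(1) that by simp
    then have "(of_int (\<sigma> i0 * \<tau> j) :: rat) \<le> of_int (\<tau> i0 * \<sigma> j)"
      using assms(3) i0(1) that by (simp add: q_def field_simps)
    then show ?thesis by linarith
  qed
  then show ?thesis using i0(1) by blast
qed

text \<open>Subtracting from \<open>\<sigma>\<close> the largest multiple of \<open>\<tau> \<ge> 0\<close> that keeps the positive entries of \<open>\<sigma>\<close>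
  nonnegative: the result agrees in sign with \<open>\<sigma>\<close>, except that it vanishes at the index \<open>i0\<close>
  realising the minimal ratio \<open>\<sigma> i / \<tau> i\<close>.\<close>

lemma min_ratio_combination:
  fixes \<sigma> \<tau> :: "nat \<Rightarrow> int"
  assumes \<tau>: "\<forall>j. \<tau> j \<ge> 0" "\<forall>j\<ge>n. \<tau> j = 0" and supp: "\<forall>j. \<tau> j \<noteq> 0 \<longrightarrow> \<sigma> j \<noteq> 0"
    and pos: "\<exists>j. \<tau> j > 0 \<and> \<sigma> j > 0"
  shows "\<exists>i0. \<tau> i0 > 0 \<and> \<sigma> i0 > 0 \<and> (\<forall>j.
    (\<sigma> j = 0 \<longrightarrow> \<tau> i0 * \<sigma> j - \<sigma> i0 * \<tau> j = 0) \<and>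
    (\<sigma> j < 0 \<longrightarrow> \<tau> i0 * \<sigma> j - \<sigma> i0 * \<tau> j < 0) \<and>
    (\<sigma> j > 0 \<longrightarrow> \<tau> i0 * \<sigma> j - \<sigma> i0 * \<tau> j \<ge> 0))"
proof -
  define D where "D = {j. \<tau> j > 0 \<and> \<sigma> j > 0}"
  have "D \<subseteq> {..<n}" using \<tau>(2) by (auto simp: D_def not_less[symmetric])
  then have "finite D" by (rule finite_subset) simp
  moreover have "D \<noteq> {}" using pos by (auto simp: D_def)
  moreover have "\<forall>j\<in>D. \<tau> j > 0" by (simp add: D_def)
  ultimately obtain i0 where i0: "i0 \<in> D" and min: "\<forall>j\<in>D. \<sigma> i0 * \<tau> j \<le> \<tau> i0 * \<sigma> j"
    using exists_min_ratio by blast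
  have i0_pos: "\<tau> i0 > 0" "\<sigma> i0 > 0" using i0 by (auto simp: D_def)
  show ?thesis
  proof (intro exI[of _ i0] conjI allI impI i0_pos)
    fix j assume "\<sigma> j = 0"
    then show "\<tau> i0 * \<sigma> j - \<sigma> i0 * \<tau> j = 0" using supp by auto
  next
    fix j assume "\<sigma> j < 0"
    then have "\<tau> i0 * \<sigma> j < 0" using i0_pos by (simp add: mult_pos_neg)
    moreover have "\<sigma> i0 * \<tau> j \<ge> 0" using i0_pos \<tau>(1) by simp
    ultimately show "\<tau> i0 * \<sigma> j - \<sigma> i0 * \<tau> j < 0" by linarith
  next
    fix j assume "\<sigma> j > 0"
    show "\<tau> i0 * \<sigma> j - \<sigma> i0 * \<tau> j \<ge> 0"
    proof (cases "\<tau> j > 0")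
      case True
      then show ?thesis using min \<open>\<sigma> j > 0\<close> by (simp add: D_def)
    next
      case False
      then have "\<tau> j = 0" using \<tau>(1)[rule_format, of j] by linarith
      then show ?thesis using i0_pos \<open>\<sigma> j > 0\<close> by simp
    qed
  qed
qed

lemma conformal_relation_smaller_support:
  assumes \<sigma>: "weight_relation n r w \<sigma>" and \<tau>: "weight_relation n r w \<tau>" "\<forall>j. \<tau> j \<ge> 0"
    and supp: "\<forall>j. \<tau> j \<noteq> 0 \<longrightarrow> \<sigma> j \<noteq> 0"
    and pos: "\<exists>j. \<tau> j > 0 \<and> \<sigma> j > 0" and neg: "\<exists>j. \<sigma> j < 0"
  shows "\<exists>\<sigma>'. weight_relation n r w \<sigma>' \<and> (\<exists>j. \<sigma>' j \<noteq> 0) \<and> conformal \<sigma>' \<sigma>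
    \<and> card (support n \<sigma>') < card (support n \<sigma>)"
proof -
  obtain i0 where i0: "\<tau> i0 > 0" "\<sigma> i0 > 0" and signs: "\<forall>j.
      (\<sigma> j = 0 \<longrightarrow> \<tau> i0 * \<sigma> j - \<sigma> i0 * \<tau> j = 0) \<and>
      (\<sigma> j < 0 \<longrightarrow> \<tau> i0 * \<sigma> j - \<sigma> i0 * \<tau> j < 0) \<and>
      (\<sigma> j > 0 \<longrightarrow> \<tau> i0 * \<sigma> j - \<sigma> i0 * \<tau> j \<ge> 0)"
    using min_ratio_combination[OF \<tau>(2) _ supp pos] weight_relation_outside[OF \<tau>(1)] by blast
  define s where "s j = \<tau> i0 * \<sigma> j - \<sigma> i0 * \<tau> j" for j
  have "weight_relation n r w s"
    using weight_relation_lincomb[OF \<sigma> \<tau>(1), of "\<tau> i0" "- \<sigma> i0"] by (simp add: s_def[abs_def])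
  moreover have "conformal s \<sigma>"
    unfolding conformal_def
  proof (intro allI)
    fix j show "(s j > 0 \<longrightarrow> \<sigma> j > 0) \<and> (s j < 0 \<longrightarrow> \<sigma> j < 0)"
      using signs[rule_format, of j] by (cases "\<sigma> j" "0::int" rule: linorder_cases) (auto simp: s_def)
  qed
  moreover have "\<exists>j. s j \<noteq> 0"
    using neg signs unfolding s_def by (metis less_irrefl)
  moreover have "support n s \<subset> support n \<sigma>"
  proof -
    have "support n s \<subseteq> support n \<sigma> - {i0}" using signs by (auto simp: support_def s_def)
    moreover have "i0 \<in> support n \<sigma>"
      using i0 weight_relation_outside[OF \<sigma>] by (auto simp: support_def not_le[symmetric])
    ultimately show ?thesis by blast
  qed
  then have "card (support n s) < card (support n \<sigma>)" by (simp add: psubset_card_mono)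
  ultimately show ?thesis by blast
qed

lemma nonneg_relation_within_support:
  assumes vw: "visible_weights n r w" and \<sigma>: "weight_relation n r w \<sigma>" "\<sigma> p \<noteq> 0"
  shows "\<exists>\<tau>. weight_relation n r w \<tau> \<and> (\<forall>j. \<tau> j \<ge> 0) \<and> (\<forall>j. \<tau> j \<noteq> 0 \<longrightarrow> \<sigma> j \<noteq> 0) \<and> (\<exists>k. \<tau> k > 0)"
proof -
  have "p \<in> support n \<sigma>" using \<sigma> weight_relation_outside[OF \<sigma>(1)] by (auto simp: support_def not_le[symmetric])
  then have "\<not> lin_indep_weights r w (support n \<sigma>)"
    using weight_relation_on_support[OF \<sigma>(1)] \<sigma>(2) unfolding lin_indep_weights_def by blast
  then have "\<not> in_open_halfspace r w (support n \<sigma>)"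
    using vw support_subset unfolding visible_weights_def by blast
  then obtain a where a: "\<forall>i\<in>support n \<sigma>. a i \<ge> 0" "\<exists>i\<in>support n \<sigma>. a i > 0"
      "\<forall>j<r. (\<Sum>i\<in>support n \<sigma>. a i * w i j) = 0"
    using gordan_alternative[OF finite_support] unfolding in_open_halfspace_def by blast
  show ?thesis
    using weight_relation_restrict[OF support_subset a(3)] a(1,2)
    by (intro exI[of _ "\<lambda>i. if i \<in> support n \<sigma> then a i else 0"]) (auto simp: support_def)
qed

lemma sign_definite_conformal_relation:
  assumes vw: "visible_weights n r w"
  shows "weight_relation n r w \<sigma> \<Longrightarrow> \<exists>i. \<sigma> i \<noteq> 0 \<Longrightarrow> \<exists>\<sigma>'. weight_relation n r w \<sigma>' \<and>
    (\<exists>i. \<sigma>' i \<noteq> 0) \<and> conformal \<sigma>' \<sigma> \<and> ((\<forall>i. \<sigma>' i \<ge> 0) \<or> (\<forall>i. \<sigma>' i \<le> 0))"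
proof (induction "card (support n \<sigma>)" arbitrary: \<sigma> rule: less_induct)
  case less
  show ?case
  proof (cases "(\<forall>i. \<sigma> i \<ge> 0) \<or> (\<forall>i. \<sigma> i \<le> 0)")
    case True
    then show ?thesis using less.prems conformal_refl by blast
  next
    case False
    then obtain p q where p: "\<sigma> p > 0" and q: "\<sigma> q < 0" by (auto simp: not_le)
    obtain \<tau> k where \<tau>: "weight_relation n r w \<tau>" "\<forall>j. \<tau> j \<ge> 0" "\<forall>j. \<tau> j \<noteq> 0 \<longrightarrow> \<sigma> j \<noteq> 0"
      and k: "\<tau> k > 0"
      using nonneg_relation_within_support[OF vw less.prems(1), of p] p by auto
    have "\<exists>s. weight_relation n r w s \<and> (\<exists>j. s j \<noteq> 0) \<and> conformal s \<sigma> \<and> card (support n s) < card (support n \<sigma>)"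
    proof (cases "\<sigma> k > 0")
      case True
      then show ?thesis
        using conformal_relation_smaller_support[OF less.prems(1) \<tau>] k q by blast
    next
      case False
      then have "- \<sigma> k > 0" using \<tau>(3) k by (simp add: less_le)
      then obtain s where "weight_relation n r w s" "\<exists>j. s j \<noteq> 0" "conformal s (\<lambda>i. - \<sigma> i)"
          "card (support n s) < card (support n \<sigma>)"
        using conformal_relation_smaller_support[OF weight_relation_uminus[OF less.prems(1)] \<tau>(1,2)] \<tau>(3) k p
        by fastforce
      then show ?thesis
        using weight_relation_uminus conformal_uminus[of s "\<lambda>i. - \<sigma> i"]
        by (intro exI[of _ "\<lambda>i. - s i"]) auto
    qed
    then obtain s where s: "weight_relation n r w s" "\<exists>j. s j \<noteq> 0" "conformal s \<sigma>"
        "card (support n s) < card (support n \<sigma>)" by blast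
    then show ?thesis using less.hyps[OF s(4) s(1,2)] conformal_trans by blast
  qed
qed

lemma pos_part_relation_step:
  assumes \<rho>: "weight_relation n r w \<rho>" and \<sigma>: "weight_relation n r w \<sigma>" "\<forall>i. \<sigma> i \<ge> 0"
    "\<exists>i. \<sigma> i \<noteq> 0" "conformal \<sigma> \<rho>"
    and IH: "\<And>\<rho>'. card (support n \<rho>') < card (support n \<rho>) \<Longrightarrow> weight_relation n r w \<rho>' \<Longrightarrow>
      weight_relation n r w (\<lambda>i. max (\<rho>' i) 0)"
  shows "weight_relation n r w (\<lambda>i. max (\<rho> i) 0)"
proof -
  have \<sigma>_pos: "\<sigma> j > 0 \<Longrightarrow> \<rho> j > 0" "\<sigma> j = 0 \<or> \<sigma> j > 0" for j
    using \<sigma>(2,4) unfolding conformal_def by (auto simp: le_less)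
  then obtain i0 where i0: "\<sigma> i0 > 0" "\<rho> i0 > 0" and signs: "\<forall>j.
      (\<rho> j = 0 \<longrightarrow> \<sigma> i0 * \<rho> j - \<rho> i0 * \<sigma> j = 0) \<and>
      (\<rho> j < 0 \<longrightarrow> \<sigma> i0 * \<rho> j - \<rho> i0 * \<sigma> j < 0) \<and>
      (\<rho> j > 0 \<longrightarrow> \<sigma> i0 * \<rho> j - \<rho> i0 * \<sigma> j \<ge> 0)"
    using min_ratio_combination[of \<sigma> n \<rho>] \<sigma>(2,3) weight_relation_outside[OF \<sigma>(1)] by (metis less_irrefl)
  define s where "s j = \<sigma> i0 * \<rho> j - \<rho> i0 * \<sigma> j" for j
  have s: "weight_relation n r w s"
    using weight_relation_lincomb[OF \<rho> \<sigma>(1), of "\<sigma> i0" "- \<rho> i0"] by (simp add: s_def[abs_def])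
  have "support n s \<subset> support n \<rho>"
  proof -
    have "support n s \<subseteq> support n \<rho> - {i0}" using signs by (auto simp: support_def s_def)
    moreover have "i0 \<in> support n \<rho>"
      using i0 weight_relation_outside[OF \<rho>] by (auto simp: support_def not_le[symmetric])
    ultimately show ?thesis by blast
  qed
  then have s_pos: "weight_relation n r w (\<lambda>j. max (s j) 0)"
    using IH s by (simp add: psubset_card_mono)
  have max_s: "max (s j) 0 = \<sigma> i0 * max (\<rho> j) 0 - \<rho> i0 * \<sigma> j" for j
    using signs[rule_format, of j] \<sigma>_pos[of j] i0
    by (cases "\<rho> j" "0::int" rule: linorder_cases) (auto simp: s_def)
  show ?thesis
    unfolding weight_relation_def
  proof (intro conjI allI impI)
    fix i assume "n \<le> i"
    then show "max (\<rho> i) 0 = 0" using weight_relation_outside[OF \<rho>] by simp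
  next
    fix j assume j: "j < r"
    have "(\<Sum>i<n. max (s i) 0 * w i j) = \<sigma> i0 * (\<Sum>i<n. max (\<rho> i) 0 * w i j) - \<rho> i0 * (\<Sum>i<n. \<sigma> i * w i j)"
      unfolding max_s by (simp add: algebra_simps sum_subtractf sum_distrib_left)
    then show "(\<Sum>i<n. max (\<rho> i) 0 * w i j) = 0"
      using s_pos \<sigma>(1) j i0 unfolding weight_relation_def by simp
  qed
qed

lemma pos_part_weight_relation:
  assumes vw: "visible_weights n r w"
  shows "weight_relation n r w \<rho> \<Longrightarrow> weight_relation n r w (\<lambda>i. max (\<rho> i) 0)"
proof (induction "card (support n \<rho>)" arbitrary: \<rho> rule: less_induct)
  case less
  consider "\<forall>i. \<rho> i \<ge> 0" | "\<forall>i. \<rho> i \<le> 0" | "\<exists>i. \<rho> i \<noteq> 0" by force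
  then show ?case
  proof cases
    case 1
    then show ?thesis using less.prems by (simp add: max_absorb1)
  next
    case 2
    then show ?thesis using weight_relation_lincomb[OF less.prems less.prems, of 0 0] by (simp add: max_absorb2)
  next
    case 3
    then obtain \<sigma> where \<sigma>: "weight_relation n r w \<sigma>" "\<exists>i. \<sigma> i \<noteq> 0" "conformal \<sigma> \<rho>"
        "(\<forall>i. \<sigma> i \<ge> 0) \<or> (\<forall>i. \<sigma> i \<le> 0)"
      using sign_definite_conformal_relation[OF vw less.prems] by blast
    show ?thesis
    proof (cases "\<forall>i. \<sigma> i \<ge> 0")
      case True
      then show ?thesis using pos_part_relation_step[OF less.prems \<sigma>(1) True \<sigma>(2,3)] less.hyps by blast
    next
      case False
      then have "\<forall>i. - \<sigma> i \<ge> 0" using \<sigma>(4) by auto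
      text \<open>Apply the step to \<open>-\<rho>\<close>, then use \<open>max \<rho> 0 = \<rho> + max (-\<rho>) 0\<close>.\<close>
      then have "weight_relation n r w (\<lambda>i. max (- \<rho> i) 0)"
        using pos_part_relation_step[OF weight_relation_uminus[OF less.prems] weight_relation_uminus[OF \<sigma>(1)]]
          \<sigma>(2,3) less.hyps by (simp add: conformal_uminus)
      then have "weight_relation n r w (\<lambda>i. 1 * \<rho> i + 1 * max (- \<rho> i) 0)"
        by (rule weight_relation_lincomb[OF less.prems])
      moreover have "(\<lambda>i. 1 * \<rho> i + 1 * max (- \<rho> i) 0) = (\<lambda>i. max (\<rho> i) 0)"
        by (auto simp: max_def)
      ultimately show ?thesis by simp
    qed
  qed
qed

section \<open>Closed orbits in the zero fibre of the moment map\<close>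

lemma cone_is_subspace_if_positive_relations:
  assumes vw: "visible_weights n r w" and S: "S \<subseteq> {..<n}"
    and rel: "\<forall>k\<in>S. \<exists>\<rho>. weight_relation n r w \<rho> \<and> (\<forall>i. i \<notin> S \<longrightarrow> \<rho> i \<le> 0) \<and> \<rho> k > 0"
  shows "cone_is_subspace r w S"
  unfolding cone_is_subspace_def
proof
  assume "\<exists>l. (\<forall>i\<in>S. dot r l (w i) \<ge> 0) \<and> (\<exists>i\<in>S. dot r l (w i) > 0)"
  then obtain l k where l: "\<forall>i\<in>S. dot r l (w i) \<ge> 0" and k: "k \<in> S" "dot r l (w k) > 0" by blast
  obtain \<rho> where \<rho>: "weight_relation n r w \<rho>" "\<forall>i. i \<notin> S \<longrightarrow> \<rho> i \<le> 0" "\<rho> k > 0"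
    using rel k(1) by blast
  text \<open>The positive part of \<open>\<rho>\<close> is a relation supported in \<open>S\<close>, but \<open>l\<close> is positive on it.\<close>
  have "weight_relation n r w (\<lambda>i. max (\<rho> i) 0)" by (rule pos_part_weight_relation[OF vw \<rho>(1)])
  then have "(\<Sum>i<n. max (\<rho> i) 0 * dot r l (w i)) = 0"
    unfolding sum_dot_swap weight_relation_def by simp
  moreover have "max (\<rho> i) 0 * dot r l (w i) \<ge> 0" for i
  proof (cases "\<rho> i > 0")
    case True
    then have "i \<in> S" using \<rho>(2) by (meson not_le)
    then show ?thesis using True l by simp
  qed simp
  moreover have "max (\<rho> k) 0 * dot r l (w k) > 0" using \<rho>(3) k by simp
  ultimately show False
    using k(1) S \<rho>(3) sum_pos2[of "{..<n}" k "\<lambda>i. max (\<rho> i) 0 * dot r l (w i)"] by auto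
qed

lemma positive_relation_at:
  assumes \<rho>: "weight_relation n r w \<rho>" "\<forall>i. i \<notin> S \<longrightarrow> \<rho> i \<le> 0"
    and \<gamma>: "weight_relation n r w \<gamma>" "\<forall>i. \<gamma> i \<noteq> 0 \<longrightarrow> i \<in> S" "\<gamma> k \<noteq> 0"
  shows "\<exists>\<rho>'. weight_relation n r w \<rho>' \<and> (\<forall>i. i \<notin> S \<longrightarrow> \<rho>' i \<le> 0) \<and> \<rho>' k > 0"
proof -
  define M where "M = (\<bar>\<rho> k\<bar> + 1) * \<gamma> k"
  have "\<gamma> k * \<gamma> k \<ge> 1"
    using \<gamma>(3) by (auto simp: zero_less_mult_iff int_one_le_iff_zero_less linorder_neq_iff)
  then have "(\<bar>\<rho> k\<bar> + 1) * 1 \<le> (\<bar>\<rho> k\<bar> + 1) * (\<gamma> k * \<gamma> k)" by (intro mult_left_mono) auto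
  then have "M * \<gamma> k \<ge> \<bar>\<rho> k\<bar> + 1" by (simp add: M_def mult_ac)
  moreover have "\<forall>i. i \<notin> S \<longrightarrow> \<gamma> i = 0" using \<gamma>(2) by blast
  ultimately show ?thesis
    using weight_relation_lincomb[OF \<rho>(1) \<gamma>(1), of 1 M] \<rho>(2)
    by (intro exI[of _ "\<lambda>i. 1 * \<rho> i + M * \<gamma> i"]) auto
qed

lemma cone_is_subspace_if_relation:
  assumes vw: "visible_weights n r w" and S: "S \<subseteq> {..<n}"
    and \<rho>: "weight_relation n r w \<rho>" "\<forall>i. i \<notin> S \<longrightarrow> \<rho> i \<le> 0" "\<forall>i\<in>S - T. \<rho> i > 0"
    and through: "\<forall>k\<in>S \<inter> T. \<exists>\<gamma>. weight_relation n r w \<gamma> \<and> (\<forall>i. \<gamma> i \<noteq> 0 \<longrightarrow> i \<in> S) \<and> \<gamma> k \<noteq> 0"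
  shows "cone_is_subspace r w S"
proof (rule cone_is_subspace_if_positive_relations[OF vw S], intro ballI)
  fix k assume "k \<in> S"
  show "\<exists>\<rho>. weight_relation n r w \<rho> \<and> (\<forall>i. i \<notin> S \<longrightarrow> \<rho> i \<le> 0) \<and> \<rho> k > 0"
  proof (cases "k \<in> T")
    case True
    then obtain \<gamma> where "weight_relation n r w \<gamma>" "\<forall>i. \<gamma> i \<noteq> 0 \<longrightarrow> i \<in> S" "\<gamma> k \<noteq> 0"
      using through \<open>k \<in> S\<close> by blast
    then show ?thesis by (rule positive_relation_at[OF \<rho>(1,2)])
  qed (use \<rho> \<open>k \<in> S\<close> in blast)
qed

lemma dot_uminus_left: "dot r (\<lambda>j. - l j) v = - dot r l (v :: nat \<Rightarrow> 'a::comm_ring)"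
  by (simp add: dot_def sum_negf)

lemma sum_weights_low [simp]: "i < n \<Longrightarrow> sum_weights n w i = w i"
  by (simp add: sum_weights_def)

lemma sum_weights_shift [simp]: "sum_weights n w (i + n) = dual_weights w i"
  by (simp add: sum_weights_def)

lemma dot_dual_weights [simp]: "dot r l (dual_weights w i) = - dot r l (w i)"
  unfolding dual_weights_def by (rule dot_uminus)

lemma weight_relation_dual_weights [simp]:
  "weight_relation n r (dual_weights w) \<rho> \<longleftrightarrow> weight_relation n r w \<rho>"
  unfolding weight_relation_def dual_weights_def by (simp add: sum_negf)

lemma visible_weights_dual_weights:
  "visible_weights n r w \<Longrightarrow> visible_weights n r (dual_weights w)"
proof -
  have "in_open_halfspace r (dual_weights w) S \<longleftrightarrow> in_open_halfspace r w S" for S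
  proof
    assume "in_open_halfspace r (dual_weights w) S"
    then obtain l where "\<forall>i\<in>S. dot r l (dual_weights w i) > 0" unfolding in_open_halfspace_def by blast
    then have "\<forall>i\<in>S. dot r (\<lambda>j. - l j) (w i) > 0" by (simp add: dot_uminus_left)
    then show "in_open_halfspace r w S" unfolding in_open_halfspace_def by blast
  next
    assume "in_open_halfspace r w S"
    then obtain l where "\<forall>i\<in>S. dot r l (w i) > 0" unfolding in_open_halfspace_def by blast
    then have "\<forall>i\<in>S. dot r (\<lambda>j. - l j) (dual_weights w i) > 0" by (simp add: dot_uminus_left)
    then show "in_open_halfspace r (dual_weights w) S" unfolding in_open_halfspace_def by blast
  qed
  moreover have "lin_indep_weights r (dual_weights w) S \<longleftrightarrow> lin_indep_weights r w S" for S
    unfolding lin_indep_weights_def dual_weights_def by (simp add: sum_negf)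
  ultimately show "visible_weights n r w \<Longrightarrow> visible_weights n r (dual_weights w)"
    unfolding visible_weights_def by simp
qed

lemma ball_pair_support:
  assumes "Sx \<subseteq> {..<n}"
  shows "(\<forall>i\<in>Sx \<union> (\<lambda>i. i + n) ` Sy. P (sum_weights n w i)) \<longleftrightarrow>
    (\<forall>i\<in>Sx. P (w i)) \<and> (\<forall>i\<in>Sy. P (dual_weights w i))"
proof -
  have "\<forall>i\<in>Sx. sum_weights n w i = w i" using assms by auto
  moreover have "(\<forall>i\<in>Sx \<union> (\<lambda>i. i + n) ` Sy. P (sum_weights n w i)) \<longleftrightarrow>
      (\<forall>i\<in>Sx. P (sum_weights n w i)) \<and> (\<forall>i\<in>Sy. P (sum_weights n w (i + n)))"
    by blast
  ultimately show ?thesis by simp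
qed

lemma bex_pair_support:
  assumes "Sx \<subseteq> {..<n}"
  shows "(\<exists>i\<in>Sx \<union> (\<lambda>i. i + n) ` Sy. P (sum_weights n w i)) \<longleftrightarrow>
    (\<exists>i\<in>Sx. P (w i)) \<or> (\<exists>i\<in>Sy. P (dual_weights w i))"
proof -
  have "\<forall>i\<in>Sx. sum_weights n w i = w i" using assms by auto
  moreover have "(\<exists>i\<in>Sx \<union> (\<lambda>i. i + n) ` Sy. P (sum_weights n w i)) \<longleftrightarrow>
      (\<exists>i\<in>Sx. P (sum_weights n w i)) \<or> (\<exists>i\<in>Sy. P (sum_weights n w (i + n)))"
    by blast
  ultimately show ?thesis by simp
qed

lemma sum_pair_support:
  assumes "Sx \<subseteq> {..<n}" "finite Sx" "finite Sy"
  shows "(\<Sum>i\<in>Sx \<union> (\<lambda>i. i + n) ` Sy. f i * sum_weights n w i j)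
    = (\<Sum>i\<in>Sx. f i * w i j) - (\<Sum>i\<in>Sy. f (i + n) * w i j)"
proof -
  have "Sx \<inter> (\<lambda>i. i + n) ` Sy = {}" using assms(1) by auto
  then have "(\<Sum>i\<in>Sx \<union> (\<lambda>i. i + n) ` Sy. f i * sum_weights n w i j)
      = (\<Sum>i\<in>Sx. f i * sum_weights n w i j) + (\<Sum>i\<in>(\<lambda>i. i + n) ` Sy. f i * sum_weights n w i j)"
    using assms by (intro sum.union_disjoint) auto
  also have "\<dots> = (\<Sum>i\<in>Sx. f i * w i j) + (\<Sum>i\<in>Sy. f (i + n) * dual_weights w i j)"
    using assms(1) by (auto simp: sum.reindex intro!: sum.cong)
  finally show ?thesis by (simp add: dual_weights_def sum_negf)
qed

lemma cone_is_subspace_pair: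
  assumes "Sx \<subseteq> {..<n}" "cone_is_subspace r w Sx" "cone_is_subspace r (dual_weights w) Sy"
  shows "cone_is_subspace r (sum_weights n w) (Sx \<union> (\<lambda>i. i + n) ` Sy)"
  unfolding cone_is_subspace_def
proof
  assume "\<exists>l. (\<forall>i\<in>Sx \<union> (\<lambda>i. i + n) ` Sy. dot r l (sum_weights n w i) \<ge> 0)
    \<and> (\<exists>i\<in>Sx \<union> (\<lambda>i. i + n) ` Sy. dot r l (sum_weights n w i) > 0)"
  then obtain l where l: "\<forall>i\<in>Sx \<union> (\<lambda>i. i + n) ` Sy. dot r l (sum_weights n w i) \<ge> 0"
    "\<exists>i\<in>Sx \<union> (\<lambda>i. i + n) ` Sy. dot r l (sum_weights n w i) > 0" by blast
  have nonneg: "\<forall>i\<in>Sx. dot r l (w i) \<ge> 0" "\<forall>i\<in>Sy. dot r l (dual_weights w i) \<ge> 0"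
    using l(1) ball_pair_support[OF assms(1), where P="\<lambda>v. dot r l v \<ge> 0"] by simp_all
  from l(2) have "(\<exists>i\<in>Sx. dot r l (w i) > 0) \<or> (\<exists>i\<in>Sy. dot r l (dual_weights w i) > 0)"
    using bex_pair_support[OF assms(1), where P="\<lambda>v. dot r l v > 0"] by simp
  then show False
  proof
    assume "\<exists>i\<in>Sx. dot r l (w i) > 0"
    then show False using assms(2) nonneg(1) unfolding cone_is_subspace_def by blast
  next
    assume "\<exists>i\<in>Sy. dot r l (dual_weights w i) > 0"
    then show False using assms(3) nonneg(2) unfolding cone_is_subspace_def by blast
  qed
qed

lemma cone_is_subspace_split:
  assumes vw: "visible_weights n r w" and Sx: "Sx \<subseteq> {..<n}" and Sy: "Sy \<subseteq> {..<n}"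
    and cone: "cone_is_subspace r (sum_weights n w) (Sx \<union> (\<lambda>i. i + n) ` Sy)"
    and through: "\<forall>k\<in>Sx \<inter> Sy. \<exists>\<gamma>. weight_relation n r w \<gamma> \<and> (\<forall>i. \<gamma> i \<noteq> 0 \<longrightarrow> i \<in> Sx \<inter> Sy) \<and> \<gamma> k \<noteq> 0"
  shows "cone_is_subspace r w Sx" "cone_is_subspace r (dual_weights w) Sy"
proof -
  have fin: "finite Sx" "finite Sy" using Sx Sy finite_subset by blast+
  then obtain A where A: "\<forall>i\<in>Sx \<union> (\<lambda>i. i + n) ` Sy. A i > 0"
      "\<forall>j<r. (\<Sum>i\<in>Sx \<union> (\<lambda>i. i + n) ` Sy. A i * sum_weights n w i j) = 0"
    using stiemke_alternative[of "Sx \<union> (\<lambda>i. i + n) ` Sy" r "sum_weights n w"] cone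
    unfolding cone_is_subspace_def by auto
  text \<open>The two halves of \<open>A\<close> combine to a relation \<open>\<rho>\<close> among the weights \<open>w\<close>, positive on
    \<open>Sx - Sy\<close> and negative on \<open>Sy - Sx\<close>.\<close>
  define \<rho> where "\<rho> i = (if i \<in> Sx then A i else 0) - (if i \<in> Sy then A (i + n) else 0)" for i
  have "(\<Sum>i<n. \<rho> i * w i j) = (\<Sum>i\<in>Sx. A i * w i j) - (\<Sum>i\<in>Sy. A (i + n) * w i j)" for j
  proof -
    have "(\<Sum>i<n. (if i \<in> S then g i else 0)) = sum g S" if "S \<subseteq> {..<n}" for S and g :: "nat \<Rightarrow> int"
      using that by (simp add: sum.inter_restrict[symmetric] Int_absorb1)
    moreover have "\<rho> i * w i j = (if i \<in> Sx then A i * w i j else 0) - (if i \<in> Sy then A (i + n) * w i j else 0)" for i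
      by (simp add: \<rho>_def left_diff_distrib)
    ultimately show ?thesis using Sx Sy by (simp add: sum_subtractf)
  qed
  then have \<rho>: "weight_relation n r w \<rho>"
    using A(2) Sx Sy sum_pair_support[OF Sx fin] unfolding weight_relation_def by (auto simp: \<rho>_def)
  have Ax: "A i > 0" if "i \<in> Sx" for i using A(1) that by blast
  have Ay: "A (i + n) > 0" if "i \<in> Sy" for i using A(1) that by blast
  show "cone_is_subspace r w Sx"
  proof (rule cone_is_subspace_if_relation[OF vw Sx \<rho>])
    show "\<forall>i. i \<notin> Sx \<longrightarrow> \<rho> i \<le> 0" "\<forall>i\<in>Sx - Sy. \<rho> i > 0"
      using Ax Ay by (auto simp: \<rho>_def less_imp_le)
  qed (use through in blast)
  show "cone_is_subspace r (dual_weights w) Sy"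
  proof (rule cone_is_subspace_if_relation[OF visible_weights_dual_weights[OF vw] Sy])
    show "weight_relation n r (dual_weights w) (\<lambda>i. - \<rho> i)" using weight_relation_uminus[OF \<rho>] by simp
    show "\<forall>i. i \<notin> Sy \<longrightarrow> - \<rho> i \<le> 0" "\<forall>i\<in>Sy - Sx. - \<rho> i > 0"
      using Ax Ay by (auto simp: \<rho>_def less_imp_le)
  qed (use through in \<open>simp only: weight_relation_dual_weights; blast\<close>)
qed

text \<open>Motzkin's alternative for the vectors \<open>w i\<close> (\<open>i \<in> I\<close>) and \<open>- w i\<close> (\<open>i \<in> I - {k}\<close>), strict at
  \<open>w k\<close>: a functional would vanish on all \<open>w i\<close>, \<open>i \<noteq> k\<close>, and not on \<open>w k\<close>, which the relation
  \<open>c\<close> forbids; so there is a nonnegative combination, i.e. an integer relation involving \<open>k\<close>.\<close>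

lemma integer_relation_through_index:
  fixes c :: "nat \<Rightarrow> 'a::field_char_0"
  assumes I: "I \<subseteq> {..<n}" "k \<in> I" and c: "\<forall>i\<in>I. c i \<noteq> 0"
    and rel: "\<forall>j<r. (\<Sum>i\<in>I. c i * of_int (w i j)) = 0"
  shows "\<exists>\<gamma>. weight_relation n r w \<gamma> \<and> (\<forall>i. \<gamma> i \<noteq> 0 \<longrightarrow> i \<in> I) \<and> \<gamma> k \<noteq> 0"
proof -
  have fin: "finite I" using I(1) finite_subset by blast
  define v where "v x = (if even x then w (x div 2) else (\<lambda>j. - w (x div 2) j))" for x
  have v: "v (2 * i) = w i" "v (Suc (2 * i)) = (\<lambda>j. - w i j)" for i by (simp_all add: v_def)
  define J where "J = (\<lambda>i. 2 * i) ` I \<union> (\<lambda>i. 2 * i + 1) ` (I - {k})"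
  have sum_J: "(\<Sum>x\<in>J. f x) = (\<Sum>i\<in>I. f (2 * i)) + (\<Sum>i\<in>I - {k}. f (2 * i + 1))"
    for f :: "nat \<Rightarrow> int"
  proof -
    have "(\<lambda>i. 2 * i) ` I \<inter> (\<lambda>i. 2 * i + 1) ` (I - {k}) = {}" by auto presburger
    then have "(\<Sum>x\<in>J. f x) = (\<Sum>x\<in>(\<lambda>i. 2 * i) ` I. f x) + (\<Sum>x\<in>(\<lambda>i. 2 * i + 1) ` (I - {k}). f x)"
      unfolding J_def using fin by (intro sum.union_disjoint) auto
    then show ?thesis by (simp add: sum.reindex inj_on_def)
  qed
  have "finite J" "{2 * k} \<subseteq> J" using fin I(2) by (auto simp: J_def)
  from motzkin_transposition_int[OF this, of r v] show ?thesis
  proof (elim disjE exE conjE)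
    fix l assume l: "\<forall>x\<in>J. dot r l (v x) \<ge> 0" "\<forall>x\<in>{2 * k}. dot r l (v x) > 0"
    have "dot r l (w i) = 0" if "i \<in> I - {k}" for i
    proof -
      have "2 * i \<in> J" "2 * i + 1 \<in> J" using that by (auto simp: J_def)
      then have "dot r l (v (2 * i)) \<ge> 0" "dot r l (v (2 * i + 1)) \<ge> 0" using l(1) by blast+
      then show ?thesis by (simp add: v dot_uminus)
    qed
    then have "(\<Sum>i\<in>I. c i * of_int (dot r l (w i))) = c k * of_int (dot r l (w k))"
      using fin I(2) by (simp add: sum.remove)
    moreover have "(\<Sum>i\<in>I. c i * of_int (dot r l (w i))) = (\<Sum>j<r. of_int (l j) * (\<Sum>i\<in>I. c i * of_int (w i j)))"
      unfolding dot_def by (simp add: sum_distrib_left sum_distrib_right mult_ac sum.swap[of _ I])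
    ultimately have "c k * of_int (dot r l (w k)) = 0" using rel by simp
    then show ?thesis using c I(2) l(2) v by simp
  next
    fix a assume a: "\<forall>x\<in>J. a x \<ge> 0" "\<exists>x\<in>{2 * k}. a x > 0" "\<forall>j<r. (\<Sum>x\<in>J. a x * v x j) = 0"
    define \<gamma> where "\<gamma> i = (if i \<in> I then a (2 * i) - (if i = k then 0 else a (2 * i + 1)) else 0)" for i
    have "(\<Sum>i\<in>I. \<gamma> i * w i j) = (\<Sum>x\<in>J. a x * v x j)" for j
      using fin I(2) by (simp add: sum_J v \<gamma>_def left_diff_distrib sum_subtractf sum.remove sum_negf if_distrib[of "\<lambda>x. x * _"])
    then have "\<forall>j<r. (\<Sum>i\<in>I. \<gamma> i * w i j) = 0" using a(3) by simp
    then have "weight_relation n r w (\<lambda>i. if i \<in> I then \<gamma> i else 0)" by (rule weight_relation_restrict[OF I(1)])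
    moreover have "(\<lambda>i. if i \<in> I then \<gamma> i else 0) = \<gamma>" by (auto simp: \<gamma>_def)
    ultimately show ?thesis using a(2) I(2) by (intro exI[of _ \<gamma>]) (auto simp: \<gamma>_def)
  qed
qed

lemma moment_zero_aspace: "(x, y) \<in> moment_zero n r w \<Longrightarrow> x \<in> aspace n \<and> y \<in> aspace n"
  unfolding moment_zero_def by auto

lemma moment_zero_relation:
  assumes "(x, y) \<in> moment_zero n r w" "j < r"
  shows "(\<Sum>i\<in>support n x \<inter> support n y. x i * y i * of_int (w i j)) = (0::'a::field)"
proof -
  define \<xi> where "\<xi> = (\<lambda>j'. if j' = j then 1 else (0::'a))"
  have "\<xi> \<in> aspace r" using assms(2) by (auto simp: \<xi>_def aspace_def)
  then have "moment n r w x y \<xi> = 0" using assms(1) by (auto simp: moment_zero_def)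
  moreover have "lie_act n r w \<xi> x i = (if i < n then of_int (w i j) * x i else 0)" for i
    using assms(2) by (simp add: lie_act_def \<xi>_def if_distrib cong: if_cong)
  ultimately have "(\<Sum>i<n. x i * y i * of_int (w i j)) = 0" unfolding moment_def by (simp add: mult_ac)
  moreover have "(\<Sum>i<n. x i * y i * of_int (w i j)) = (\<Sum>i\<in>support n x \<inter> support n y. x i * y i * of_int (w i j))"
    by (rule sum.mono_neutral_right) (auto simp: support_def)
  ultimately show ?thesis by simp
qed

lemma moment_zero_relations_through_common_support:
  fixes x y :: "nat \<Rightarrow> 'a::field_char_0"
  assumes "(x, y) \<in> moment_zero n r w"
  shows "\<forall>k\<in>support n x \<inter> support n y. \<exists>\<gamma>. weight_relation n r w \<gamma>
    \<and> (\<forall>i. \<gamma> i \<noteq> 0 \<longrightarrow> i \<in> support n x \<inter> support n y) \<and> \<gamma> k \<noteq> 0"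
proof
  fix k assume k: "k \<in> support n x \<inter> support n y"
  have "support n x \<inter> support n y \<subseteq> {..<n}" using support_subset by blast
  moreover have "\<forall>i\<in>support n x \<inter> support n y. x i * y i \<noteq> 0" by (simp add: support_def)
  moreover have "\<forall>j<r. (\<Sum>i\<in>support n x \<inter> support n y. (x i * y i) * of_int (w i j)) = 0"
    using moment_zero_relation[OF assms] by blast
  ultimately show "\<exists>\<gamma>. weight_relation n r w \<gamma> \<and> (\<forall>i. \<gamma> i \<noteq> 0 \<longrightarrow> i \<in> support n x \<inter> support n y) \<and> \<gamma> k \<noteq> 0"
    by (rule integer_relation_through_index[OF _ k])
qed

lemma pair_vec_in_aspace: "x \<in> aspace n \<Longrightarrow> y \<in> aspace n \<Longrightarrow> pair_vec n x y \<in> aspace (2 * n)"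
  unfolding aspace_def pair_vec_def by auto

lemma support_pair_vec:
  assumes "x \<in> aspace n" "y \<in> aspace n"
  shows "support (2 * n) (pair_vec n x y) = support n x \<union> (\<lambda>i. i + n) ` support n y"
proof (intro equalityI subsetI)
  fix i assume i: "i \<in> support (2 * n) (pair_vec n x y)"
  show "i \<in> support n x \<union> (\<lambda>i. i + n) ` support n y"
  proof (cases "i < n")
    case False
    then have "i - n \<in> support n y" "i = i - n + n" using i by (auto simp: support_def pair_vec_def)
    then show ?thesis by blast
  qed (use i in \<open>auto simp: support_def pair_vec_def\<close>)
qed (auto simp: support_def pair_vec_def)

lemma closed_pair_torbit_iff:
  fixes x y :: "nat \<Rightarrow> 'a::field_char_0"
  assumes "algebraically_closed TYPE('a)" "x \<in> aspace n" "y \<in> aspace n"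
  shows "zariski_closed (2 * n) (torbit (2 * n) r (sum_weights n w) (pair_vec n x y)) \<longleftrightarrow>
    cone_is_subspace r (sum_weights n w) (support n x \<union> (\<lambda>i. i + n) ` support n y)"
  using closed_torbit_iff[OF assms(1)] support_pair_vec[OF assms(2,3)]
  by simp

lemma support_eq_if_pair_torbit_eq:
  fixes x y :: "nat \<Rightarrow> 'a::field"
  assumes "x \<in> aspace n" "y \<in> aspace n" "x' \<in> aspace n" "y' \<in> aspace n"
    and eq: "torbit (2 * n) r (sum_weights n w) (pair_vec n x y) = torbit (2 * n) r (sum_weights n w) (pair_vec n x' y')"
  shows "support n x = support n x'"
proof -
  have "pair_vec n x y \<in> torbit (2 * n) r (sum_weights n w) (pair_vec n x' y')"
    using mem_torbit_self[OF pair_vec_in_aspace[OF assms(1,2)], of r "sum_weights n w"] unfolding eq .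
  then have "support (2 * n) (pair_vec n x y) = support (2 * n) (pair_vec n x' y')"
    by (rule support_torbit)
  then have "support n x \<union> (\<lambda>i. i + n) ` support n y = support n x' \<union> (\<lambda>i. i + n) ` support n y'"
    unfolding support_pair_vec[OF assms(1,2)] support_pair_vec[OF assms(3,4)] .
  moreover have "(A \<union> (\<lambda>i. i + n) ` B) \<inter> {..<n} = A" if "A \<subseteq> {..<n}" for A B
    using that by auto
  ultimately show ?thesis using support_subset[of n x] support_subset[of n x'] by metis
qed

lemma closed_pair_torbit_if_closed_factors:
  fixes x y :: "nat \<Rightarrow> 'a::field_char_0"
  assumes ac: "algebraically_closed TYPE('a)" and xy: "x \<in> aspace n" "y \<in> aspace n"
    and "zariski_closed n (torbit n r w x)" "zariski_closed n (torbit n r (dual_weights w) y)"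
  shows "zariski_closed (2 * n) (torbit (2 * n) r (sum_weights n w) (pair_vec n x y))"
proof -
  have "cone_is_subspace r w (support n x)" "cone_is_subspace r (dual_weights w) (support n y)"
    using assms(4,5) closed_torbit_iff[OF ac] by simp_all
  then show ?thesis
    unfolding closed_pair_torbit_iff[OF ac xy] by (rule cone_is_subspace_pair[OF support_subset])
qed

lemma closed_factors_if_closed_pair_torbit:
  fixes x y :: "nat \<Rightarrow> 'a::field_char_0"
  assumes ac: "algebraically_closed TYPE('a)" and vw: "visible_weights n r w"
    and xy: "(x, y) \<in> moment_zero n r w"
    and closed: "zariski_closed (2 * n) (torbit (2 * n) r (sum_weights n w) (pair_vec n x y))"
  shows "zariski_closed n (torbit n r w x)" "zariski_closed n (torbit n r (dual_weights w) y)"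
proof -
  have aspace: "x \<in> aspace n" "y \<in> aspace n" using moment_zero_aspace[OF xy] by auto
  have "cone_is_subspace r (sum_weights n w) (support n x \<union> (\<lambda>i. i + n) ` support n y)"
    using closed unfolding closed_pair_torbit_iff[OF ac aspace] .
  from cone_is_subspace_split[OF vw support_subset support_subset this
      moment_zero_relations_through_common_support[OF xy]]
  show "zariski_closed n (torbit n r w x)" "zariski_closed n (torbit n r (dual_weights w) y)"
    unfolding closed_torbit_iff[OF ac] .
qed

lemma indicator_relation_in_moment_zero:
  assumes S: "S \<subseteq> {..<n}" and b: "\<forall>j<r. (\<Sum>i\<in>S. b i * w i j) = 0"
  shows "((\<lambda>i. if i \<in> S then 1 else 0), (\<lambda>i. if i \<in> S then of_int (b i) else 0))
    \<in> (moment_zero n r w :: ((nat \<Rightarrow> 'a::field) \<times> (nat \<Rightarrow> 'a)) set)"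
proof -
  have "moment n r w (\<lambda>i. if i \<in> S then 1 else 0) (\<lambda>i. if i \<in> S then of_int (b i) else 0) \<xi> = (0::'a)" for \<xi>
  proof -
    have "moment n r w (\<lambda>i. if i \<in> S then 1 else 0) (\<lambda>i. if i \<in> S then of_int (b i) else 0) \<xi>
        = (\<Sum>i<n. if i \<in> S then of_int (b i) * (\<Sum>j<r. of_int (w i j) * \<xi> j) else 0)"
      unfolding moment_def lie_act_def by (intro sum.cong refl) auto
    also have "\<dots> = (\<Sum>i\<in>S. of_int (b i) * (\<Sum>j<r. of_int (w i j) * \<xi> j))"
      using S by (simp add: sum.inter_restrict[symmetric] Int_absorb1)
    also have "\<dots> = (\<Sum>j<r. \<xi> j * of_int (\<Sum>i\<in>S. b i * w i j))"
      by (simp add: sum_distrib_left sum_distrib_right mult_ac) (rule sum.swap)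
    finally show ?thesis using b by simp
  qed
  then show ?thesis using S by (auto simp: moment_zero_def aspace_def)
qed

lemma cone_is_subspace_symmetric_pair:
  assumes S: "S \<subseteq> {..<n}"
  shows "cone_is_subspace r (sum_weights n w) (S \<union> (\<lambda>i. i + n) ` S)"
  unfolding cone_is_subspace_def
proof
  assume "\<exists>l. (\<forall>i\<in>S \<union> (\<lambda>i. i + n) ` S. dot r l (sum_weights n w i) \<ge> 0)
    \<and> (\<exists>i\<in>S \<union> (\<lambda>i. i + n) ` S. dot r l (sum_weights n w i) > 0)"
  then obtain l where "\<forall>i\<in>S \<union> (\<lambda>i. i + n) ` S. dot r l (sum_weights n w i) \<ge> 0"
    "\<exists>i\<in>S \<union> (\<lambda>i. i + n) ` S. dot r l (sum_weights n w i) > 0" by blast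
  then have "\<forall>i\<in>S. dot r l (w i) \<ge> 0 \<and> - dot r l (w i) \<ge> 0"
    "(\<exists>i\<in>S. dot r l (w i) > 0) \<or> (\<exists>i\<in>S. - dot r l (w i) > 0)"
    unfolding ball_pair_support[OF S, where P="\<lambda>v. dot r l v \<ge> 0"]
      bex_pair_support[OF S, where P="\<lambda>v. dot r l v > 0"] by simp_all
  then show False by force
qed

text \<open>If \<open>S\<close> lies in an open half space and carries a relation \<open>b\<close>, then \<open>(x, y) = (1, b)\<close> on the
  support \<open>S'\<close> of \<open>b\<close> lies in the zero fibre, and its orbit is closed although \<open>T \<cdot> x\<close> is not.\<close>

lemma closed_pair_torbit_with_nonclosed_factor:
  assumes ac: "algebraically_closed TYPE('a::field_char_0)" and "\<not> visible_weights n r w"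
  shows "\<exists>x y :: nat \<Rightarrow> 'a. (x, y) \<in> moment_zero n r w
    \<and> zariski_closed (2 * n) (torbit (2 * n) r (sum_weights n w) (pair_vec n x y))
    \<and> \<not> zariski_closed n (torbit n r w x)"
proof -
  obtain S where S: "S \<subseteq> {..<n}" "in_open_halfspace r w S" "\<not> lin_indep_weights r w S"
    using assms(2) unfolding visible_weights_def by blast
  obtain l where l: "\<forall>i\<in>S. dot r l (w i) > 0" using S(2) unfolding in_open_halfspace_def by blast
  obtain b i0 where b: "\<forall>j<r. (\<Sum>i\<in>S. b i * w i j) = 0" and i0: "i0 \<in> S" "b i0 \<noteq> 0"
    using S(3) unfolding lin_indep_weights_def by blast
  define S' where "S' = {i \<in> S. b i \<noteq> 0}"
  have S': "S' \<subseteq> {..<n}" using S by (auto simp: S'_def)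
  have "(\<Sum>i\<in>S'. b i * w i j) = (\<Sum>i\<in>S. b i * w i j)" for j
    by (rule sum.mono_neutral_left) (use S in \<open>auto simp: S'_def intro: finite_subset\<close>)
  then have b': "\<forall>j<r. (\<Sum>i\<in>S'. b i * w i j) = 0" using b by simp
  define x :: "nat \<Rightarrow> 'a" where "x = (\<lambda>i. if i \<in> S' then 1 else 0)"
  define y :: "nat \<Rightarrow> 'a" where "y = (\<lambda>i. if i \<in> S' then of_int (b i) else 0)"
  have xy: "(x, y) \<in> moment_zero n r w"
    unfolding x_def y_def by (rule indicator_relation_in_moment_zero[OF S' b'])
  have supp: "support n x = S'" "support n y = S'" using S' by (auto simp: x_def y_def support_def S'_def)
  have "\<not> cone_is_subspace r w S'"
  proof -
    have "\<forall>i\<in>S'. dot r l (w i) \<ge> 0" "i0 \<in> S'" "dot r l (w i0) > 0"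
      using l i0 by (auto simp: S'_def less_imp_le)
    then show ?thesis unfolding cone_is_subspace_def by blast
  qed
  then have "\<not> zariski_closed n (torbit n r w x)" unfolding closed_torbit_iff[OF ac] supp .
  moreover have "zariski_closed (2 * n) (torbit (2 * n) r (sum_weights n w) (pair_vec n x y))"
    using moment_zero_aspace[OF xy] cone_is_subspace_symmetric_pair[OF S']
    by (simp add: closed_pair_torbit_iff[OF ac] supp)
  ultimately show ?thesis using xy by blast
qed

definition closed_zero_fibre_orbits :: "nat \<Rightarrow> nat \<Rightarrow> (nat \<Rightarrow> nat \<Rightarrow> int) \<Rightarrow> (nat \<Rightarrow> 'a::field) set set" where
  "closed_zero_fibre_orbits n r w = {Orb. \<exists>(x, y) \<in> moment_zero n r w.
     Orb = torbit (2 * n) r (sum_weights n w) (pair_vec n x y) \<and> zariski_closed (2 * n) Orb}"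

definition closed_factor_orbits :: "nat \<Rightarrow> nat \<Rightarrow> (nat \<Rightarrow> nat \<Rightarrow> int) \<Rightarrow> (nat \<Rightarrow> 'a::field) set set" where
  "closed_factor_orbits n r w = {torbit (2 * n) r (sum_weights n w) (pair_vec n x y) | x y.
     (x, y) \<in> moment_zero n r w \<and> zariski_closed n (torbit n r w x)
     \<and> zariski_closed n (torbit n r (dual_weights w) y)}"

lemma closed_factor_torbit_pair_invariant:
  fixes x y :: "nat \<Rightarrow> 'a::field_char_0"
  assumes ac: "algebraically_closed TYPE('a)"
    and aspace: "x \<in> aspace n" "y \<in> aspace n" "x' \<in> aspace n" "y' \<in> aspace n"
    and "torbit (2 * n) r (sum_weights n w) (pair_vec n x y) = torbit (2 * n) r (sum_weights n w) (pair_vec n x' y')"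
  shows "zariski_closed n (torbit n r w x) \<longleftrightarrow> zariski_closed n (torbit n r w x')"
  using support_eq_if_pair_torbit_eq[OF assms(2-)]
  by (simp add: closed_torbit_iff[OF ac])

lemma closed_factor_orbits_subset:
  assumes ac: "algebraically_closed TYPE('a::field_char_0)"
  shows "closed_factor_orbits n r w \<subseteq> (closed_zero_fibre_orbits n r w :: (nat \<Rightarrow> 'a) set set)"
proof (rule subsetI)
  fix Orb :: "(nat \<Rightarrow> 'a) set" assume "Orb \<in> closed_factor_orbits n r w"
  then obtain x y where xy: "Orb = torbit (2 * n) r (sum_weights n w) (pair_vec n x y)"
    "(x, y) \<in> moment_zero n r w" "zariski_closed n (torbit n r w x)"
    "zariski_closed n (torbit n r (dual_weights w) y)"
    unfolding closed_factor_orbits_def by blast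
  have "zariski_closed (2 * n) Orb"
    unfolding xy(1) using moment_zero_aspace[OF xy(2)] closed_pair_torbit_if_closed_factors[OF ac _ _ xy(3,4)]
    by blast
  then show "Orb \<in> closed_zero_fibre_orbits n r w"
    using xy(1,2) unfolding closed_zero_fibre_orbits_def by blast
qed

lemma closed_zero_fibre_orbits_subset:
  assumes ac: "algebraically_closed TYPE('a::field_char_0)" and vw: "visible_weights n r w"
  shows "closed_zero_fibre_orbits n r w \<subseteq> (closed_factor_orbits n r w :: (nat \<Rightarrow> 'a) set set)"
proof (rule subsetI)
  fix Orb :: "(nat \<Rightarrow> 'a) set" assume "Orb \<in> closed_zero_fibre_orbits n r w"
  then obtain x y where xy: "(x, y) \<in> moment_zero n r w" "Orb = torbit (2 * n) r (sum_weights n w) (pair_vec n x y)"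
    "zariski_closed (2 * n) Orb"
    unfolding closed_zero_fibre_orbits_def by blast
  then show "Orb \<in> closed_factor_orbits n r w"
    using closed_factors_if_closed_pair_torbit[OF ac vw xy(1)] unfolding closed_factor_orbits_def by blast
qed

lemma closed_zero_fibre_orbits_neq:
  assumes ac: "algebraically_closed TYPE('a::field_char_0)" and not_vw: "\<not> visible_weights n r w"
  shows "closed_zero_fibre_orbits n r w \<noteq> (closed_factor_orbits n r w :: (nat \<Rightarrow> 'a) set set)"
proof -
  obtain x y :: "nat \<Rightarrow> 'a" where xy: "(x, y) \<in> moment_zero n r w"
    "zariski_closed (2 * n) (torbit (2 * n) r (sum_weights n w) (pair_vec n x y))"
    "\<not> zariski_closed n (torbit n r w x)"
    using closed_pair_torbit_with_nonclosed_factor[OF ac not_vw] by blast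
  have "torbit (2 * n) r (sum_weights n w) (pair_vec n x y) \<in> closed_zero_fibre_orbits n r w"
    using xy(1,2) unfolding closed_zero_fibre_orbits_def by blast
  moreover have "torbit (2 * n) r (sum_weights n w) (pair_vec n x y) \<notin> closed_factor_orbits n r w"
  proof
    assume "torbit (2 * n) r (sum_weights n w) (pair_vec n x y) \<in> closed_factor_orbits n r w"
    then obtain x' y' where x'y': "(x', y') \<in> moment_zero n r w" "zariski_closed n (torbit n r w x')"
      "torbit (2 * n) r (sum_weights n w) (pair_vec n x y) = torbit (2 * n) r (sum_weights n w) (pair_vec n x' y')"
      unfolding closed_factor_orbits_def by blast
    then show False
      using xy(3) closed_factor_torbit_pair_invariant[OF ac _ _ _ _ x'y'(3)]
        moment_zero_aspace[OF xy(1)] moment_zero_aspace[OF x'y'(1)] by blast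
  qed
  ultimately show ?thesis by blast
qed

theorem proposition3p10:
  fixes n r :: nat and w :: "nat \<Rightarrow> nat \<Rightarrow> int"
  assumes "algebraically_closed TYPE('a::field_char_0)"
  shows "visible n r w TYPE('a) \<longleftrightarrow> (
    {Orb. \<exists>(x, y) \<in> moment_zero n r w.
          Orb = torbit (2 * n) r (sum_weights n w) (pair_vec n x y :: nat \<Rightarrow> 'a)
          \<and> zariski_closed (2 * n) Orb}
    = {torbit (2 * n) r (sum_weights n w) (pair_vec n x y :: nat \<Rightarrow> 'a) | x y.
          (x, y) \<in> moment_zero n r w
          \<and> zariski_closed n (torbit n r w x)
          \<and> zariski_closed n (torbit n r (dual_weights w) y)})"
proof -
  have "visible n r w TYPE('a) \<longleftrightarrow>
      closed_zero_fibre_orbits n r w = (closed_factor_orbits n r w :: (nat \<Rightarrow> 'a) set set)"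
  proof (cases "visible_weights n r w")
    case True
    then show ?thesis
      using visible_iff_visible_weights[OF assms] closed_factor_orbits_subset[OF assms]
        closed_zero_fibre_orbits_subset[OF assms] by blast
  next
    case False
    then show ?thesis
      using visible_iff_visible_weights[OF assms] closed_zero_fibre_orbits_neq[OF assms] by blast
  qed
  then show ?thesis unfolding closed_zero_fibre_orbits_def closed_factor_orbits_def .
qed

end
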